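(* Consider the multi-component Curie–Weiss Ising model described in the context, with $\mathbf K$ positive definite and $\beta=\beta_{cr}$. For each $n$ let $\sigma$ be distributed according to the Gibbs measure $\mu_n$, let $\bm U_n:=\bm U_n(\sigma)$, and let $\bm Y_n\sim\mathcal N(0,\mathbf C_n^{-1})$ be independent of $\sigma$. Then $\bm U_n+\bm Y_n$ converges in distribution, as $n\to\infty$, to the probability measure on $\mathbb R^m$ with density \[ f(\bm x)=\frac1{\tilde Z}\exp\Big(-\frac12\sum_{i=1}^{m-1}(\lambda_i-\lambda_i^2)x_i^2-\frac{x_m^4}{12}\sum_{i=1}^m\frac{(V_{im})^4}{p_i}\Big), \] where $\tilde Z$ is a normalizing constant.
   Context: Fix an integer $m\ge 1$, proportions $p_1,\dots,p_m>0$ with $\sum_i p_i=1$, and a symmetric matrix $\mathbf K=(k_{ij})$ with all $k_{ij}>0$. The parameter $n$ ranges over positive integers with $np_i\in\mathbb N$ for all $i$. The vertex set $V=\{1,\dots,n\}$ is partitioned into blocks $G_1,\dots,G_m$ with $|G_i|=np_i$; for $v\in G_i,w\in G_j$ put $K(v,w)=k_{ij}/n$. On $\Omega=\{-1,+1\}^V$ the Gibbs measure at inverse temperature $\beta$ is $\mu_n(\sigma)\propto\exp\big(\beta\sum_{\{v,w\},v\ne w}K(v,w)\sigma(v)\sigma(w)\big)$. Block magnetizations: $M^{(i)}(\sigma)=\sum_{v\in G_i}\sigma(v)$, $\bm M(\sigma)=(M^{(1)}(\sigma),\dots,M^{(m)}(\sigma))^\top$. Let $\mathbf B=(p_ik_{ij})$,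 $\mathbf a>0$ its left Perron eigenvector with $\|\mathbf a\|_1=1$, and $\beta_{cr}=(\sum_{i,j}a_ip_ik_{ij})^{-1}$. Let $\mathbf D=\mathrm{diag}(\sqrt{p_1},\dots,\sqrt{p_m})$. At $\beta=\beta_{cr}$ the symmetric positive definite matrix $\beta\mathbf D\mathbf K\mathbf D$ has largest eigenvalue $1$, and we write $\beta\mathbf D\mathbf K\mathbf D=\mathbf V\,\mathrm{diag}(\lambda_1,\dots,\lambda_{m-1},1)\mathbf V^\top$ with $\mathbf V=(V_{ij})$ orthogonal and $0<\lambda_1\le\dots\le\lambda_{m-1}<1$. Define $\mathbf\Gamma_n=\mathrm{diag}(n^{-1/2},\dots,n^{-1/2},n^{-3/4})$, $\mathbf C_n=\mathrm{diag}(\lambda_1,\dots,\lambda_{m-1},n^{1/2})$ and $\bm U_n(\sigma)=\mathbf\Gamma_n\mathbf V^\top\mathbf D^{-1}\bm M(\sigma)$. *)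

theory Defs
  imports "HOL-Probability.Probability"
begin

text \<open>Conventions: block indices and coordinates of R^m are 0-based, i.e. block i of the
paper is index i-1 here; the distinguished last coordinate m of the paper is index m-1.
Vectors in R^m are extensional functions nat => real on {..<m}, with measure space
Rm m = PiM {..<m} (lborel).  Vertices are 0..n-1; G n v is the block of vertex v.\<close>

definition Rm :: "nat \<Rightarrow> (nat \<Rightarrow> real) measure" where
  "Rm m = PiM {..<m} (\<lambda>_. lborel)"

definition admissible_sizes :: "nat \<Rightarrow> (nat \<Rightarrow> real) \<Rightarrow> nat set" where
  "admissible_sizes m p = {n. n > 0 \<and> (\<forall>i<m. real n * p i \<in> \<nat>)}"

text \<open>Critical inverse temperature, given the left Perron eigenvector a of B = (p_i k_ij).\<close>
definition beta_cr :: "nat \<Rightarrow> (nat \<Rightarrow> real) \<Rightarrow> (nat \<Rightarrow> nat \<Rightarrow> real) \<Rightarrow> (nat \<Rightarrow> real) \<Rightarrow> real" where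
  "beta_cr m p k a = 1 / (\<Sum>i<m. \<Sum>j<m. a i * p i * k i j)"

definition config_set :: "nat \<Rightarrow> (nat \<Rightarrow> real) set" where
  "config_set n = PiE {..<n} (\<lambda>_. {-1, 1})"

definition interaction :: "nat \<Rightarrow> (nat \<Rightarrow> nat) \<Rightarrow> (nat \<Rightarrow> nat \<Rightarrow> real) \<Rightarrow> (nat \<Rightarrow> real) \<Rightarrow> real" where
  "interaction n g k \<sigma> = (\<Sum>v<n. \<Sum>w<v. (k (g v) (g w) / real n) * \<sigma> v * \<sigma> w)"

definition gibbs_measure :: "nat \<Rightarrow> (nat \<Rightarrow> nat) \<Rightarrow> (nat \<Rightarrow> nat \<Rightarrow> real) \<Rightarrow> real \<Rightarrow> (nat \<Rightarrow> real) measure" where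
  "gibbs_measure n g k \<beta> =
     density (count_space (config_set n))
       (\<lambda>\<sigma>. ennreal (exp (\<beta> * interaction n g k \<sigma>) /
                     (\<Sum>\<tau>\<in>config_set n. exp (\<beta> * interaction n g k \<tau>))))"

definition block_mag :: "nat \<Rightarrow> (nat \<Rightarrow> nat) \<Rightarrow> (nat \<Rightarrow> real) \<Rightarrow> nat \<Rightarrow> real" where
  "block_mag n g \<sigma> i = (\<Sum>v\<in>{v. v < n \<and> g v = i}. \<sigma> v)"

text \<open>U_n(sigma) = Gamma_n V^T D^{-1} M(sigma).\<close>
definition U_vec :: "nat \<Rightarrow> nat \<Rightarrow> (nat \<Rightarrow> real) \<Rightarrow> (nat \<Rightarrow> nat \<Rightarrow> real) \<Rightarrow> (nat \<Rightarrow> nat)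
     \<Rightarrow> (nat \<Rightarrow> real) \<Rightarrow> (nat \<Rightarrow> real)" where
  "U_vec m n p V g \<sigma> =
     (\<lambda>j\<in>{..<m}. (if j = m - 1 then real n powr (-3/4) else real n powr (-1/2)) *
                 (\<Sum>i<m. V i j * block_mag n g \<sigma> i / sqrt (p i)))"

definition Cn_diag :: "nat \<Rightarrow> (nat \<Rightarrow> real) \<Rightarrow> nat \<Rightarrow> nat \<Rightarrow> real" where
  "Cn_diag m lam n = (\<lambda>j. if j = m - 1 then sqrt (real n) else lam j)"

text \<open>Centered Gaussian on R^m with covariance diag(1/c_0,...,1/c_{m-1}) = C^{-1}
  (a Gaussian with diagonal covariance is the product of the univariate normals).\<close>
definition gaussian_diag :: "nat \<Rightarrow> (nat \<Rightarrow> real) \<Rightarrow> (nat \<Rightarrow> real) measure" where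
  "gaussian_diag m c = PiM {..<m} (\<lambda>i. density lborel (normal_density 0 (1 / sqrt (c i))))"

definition limit_density :: "nat \<Rightarrow> (nat \<Rightarrow> real) \<Rightarrow> (nat \<Rightarrow> real) \<Rightarrow> (nat \<Rightarrow> nat \<Rightarrow> real)
     \<Rightarrow> (nat \<Rightarrow> real) \<Rightarrow> real" where
  "limit_density m p lam V x =
     exp (- (1/2) * (\<Sum>i<m-1. (lam i - (lam i)^2) * (x i)^2)
          - (x (m-1))^4 / 12 * (\<Sum>i<m. (V i (m-1))^4 / p i))"

definition limit_measure :: "nat \<Rightarrow> (nat \<Rightarrow> real) \<Rightarrow> (nat \<Rightarrow> real) \<Rightarrow> (nat \<Rightarrow> nat \<Rightarrow> real)
     \<Rightarrow> (nat \<Rightarrow> real) measure" where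
  "limit_measure m p lam V =
     density (Rm m) (\<lambda>x. ennreal (limit_density m p lam V x /
                          (\<integral>y. limit_density m p lam V y \<partial>Rm m)))"

definition conv_in_distribution :: "nat filter \<Rightarrow> nat \<Rightarrow> (nat \<Rightarrow> (nat \<Rightarrow> real) measure)
     \<Rightarrow> (nat \<Rightarrow> real) measure \<Rightarrow> bool" where
  "conv_in_distribution F m \<mu> \<nu> \<longleftrightarrow>
     (\<forall>f :: (nat \<Rightarrow> real) \<Rightarrow> real.
        continuous_on (space (Rm m)) f \<and> bounded (f ` space (Rm m)) \<longrightarrow>
        ((\<lambda>n. \<integral>x. f x \<partial>\<mu> n) \<longlongrightarrow> (\<integral>x. f x \<partial>\<nu>)) F)"

end

theory Submission
  imports Defs "Jordan_Normal_Form.Determinant" "HOL-Real_Asymp.Real_Asymp"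
begin

text \<open>Given \<sigma>, the vector U_n(\<sigma>) + Y_n is Gaussian with mean U_n(\<sigma>) and covariance C_n^{-1}, so the
law of U_n + Y_n has the Gaussian-mixture density \<Sum>_\<sigma> \<mu>_n(\<sigma>) N(U_n(\<sigma>), C_n^{-1})(x).
Completing the square (the Hubbard--Stratonovich transform) makes the exponent linear in \<sigma>, the sum
over \<sigma> factorizes into \<Prod>_v 2 cosh, and the density becomes proportional to
  q_n(x) = exp(- 1/2 \<Sum>_{j<m-1} (\<lambda>_j - \<lambda>_j^2) x_j^2 - n \<Sum>_i p_i G(t_{n,i}(x))),   G(t) = t^2/2 - ln cosh t,
where the fields t_{n,i}(x) are linear in x and of order n^{-1/4}.  Since G(t) ~ t^4/12 at 0, q_n
converges pointwise to the limit density, and G(t) \<ge> min(t^4/27, t^2/108) gives a Gaussian bound on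
q_n that is uniform in n; dominated convergence then gives the convergence of \<integral> f q_n / \<integral> q_n for
every bounded measurable f.\<close>

section \<open>The function $t^2/2 - \ln\cosh t$\<close>

definition lncosh_gap :: "real \<Rightarrow> real" where
  "lncosh_gap t = t\<^sup>2 / 2 - ln (cosh t)"

lemma tanh_le_self:
  fixes s :: real assumes "0 \<le> s" shows "tanh s \<le> s"
proof -
  have "(\<lambda>x. x - tanh x) 0 \<le> (\<lambda>x. x - tanh x) s"
  proof (rule DERIV_nonneg_imp_nondecreasing[OF assms])
    fix x :: real
    show "\<exists>y. ((\<lambda>x. x - tanh x) has_real_derivative y) (at x) \<and> 0 \<le> y"
      by (rule exI[of _ "1 - (1 - tanh x ^ 2)"]) (auto intro!: derivative_eq_intros)
  qed
  then show ?thesis by simp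
qed

lemma tanh_ge_cubic:
  fixes s :: real assumes "0 \<le> s" shows "s - s^3 / 3 \<le> tanh s"
proof -
  have "(\<lambda>x. tanh x - x + x^3 / 3) 0 \<le> (\<lambda>x. tanh x - x + x^3 / 3) s"
  proof (rule DERIV_nonneg_imp_nondecreasing[OF assms])
    fix x :: real assume x: "0 \<le> x"
    then have "tanh x ^ 2 \<le> x\<^sup>2"
      using tanh_le_self[OF x] by (intro power_mono) auto
    then show "\<exists>y. ((\<lambda>x. tanh x - x + x^3 / 3) has_real_derivative y) (at x) \<and> 0 \<le> y"
      by (intro exI[of _ "(1 - tanh x ^ 2) - 1 + 3 * x\<^sup>2 / 3"]) (auto intro!: derivative_eq_intros)
  qed
  then show ?thesis by simp
qed

lemma cubic_le_self_minus_tanh: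
  fixes x :: real assumes x: "0 \<le> x" "x \<le> 1" shows "4 * x^3 / 27 \<le> x - tanh x"
proof -
  have "(\<lambda>x. x - tanh x - 4 * x^3 / 27) 0 \<le> (\<lambda>x. x - tanh x - 4 * x^3 / 27) x"
  proof (rule DERIV_nonneg_imp_nondecreasing[OF x(1)])
    fix y :: real assume y: "0 \<le> y" "y \<le> x"
    have "y * y\<^sup>2 \<le> y * 1"
      using y x by (intro mult_left_mono) (auto simp: power_le_one)
    then have "2 * y / 3 \<le> tanh y"
      using tanh_ge_cubic[OF y(1)] by (simp add: power3_eq_cube power2_eq_square)
    then have "(2 * y / 3)\<^sup>2 \<le> tanh y ^ 2"
      using y by (intro power_mono) auto
    then show "\<exists>d. ((\<lambda>x. x - tanh x - 4 * x^3 / 27) has_real_derivative d) (at y) \<and> 0 \<le> d"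
      by (intro exI[of _ "1 - (1 - tanh y ^ 2) - 4 * (3 * y\<^sup>2) / 27"])
         (auto intro!: derivative_eq_intros simp: power2_eq_square)
  qed
  then show ?thesis by simp
qed

lemma lncosh_gap_has_real_derivative: "(lncosh_gap has_real_derivative (x - tanh x)) (at x)"
proof -
  have "(lncosh_gap has_real_derivative (2 * x / 2 - sinh x / cosh x)) (at x)"
    unfolding lncosh_gap_def [abs_def] by (auto intro!: derivative_eq_intros simp: cosh_real_pos)
  then show ?thesis by (simp add: tanh_def)
qed

lemma lncosh_gap_0 [simp]: "lncosh_gap 0 = 0"
  by (simp add: lncosh_gap_def)

lemma lncosh_gap_abs [simp]: "lncosh_gap \<bar>s\<bar> = lncosh_gap s"
  by (simp add: lncosh_gap_def abs_if)

lemma continuous_on_lncosh_gap [continuous_intros]: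
  "continuous_on S f \<Longrightarrow> continuous_on S (\<lambda>x. lncosh_gap (f x))"
  unfolding lncosh_gap_def by (intro continuous_intros) (auto simp: cosh_real_nonzero)

lemma lncosh_gap_mono:
  fixes a b :: real assumes "0 \<le> a" "a \<le> b" shows "lncosh_gap a \<le> lncosh_gap b"
proof (rule DERIV_nonneg_imp_nondecreasing[OF assms(2)])
  fix x assume "a \<le> x" "x \<le> b"
  then have "tanh x \<le> x" using assms by (intro tanh_le_self) auto
  then show "\<exists>y. (lncosh_gap has_real_derivative y) (at x) \<and> 0 \<le> y"
    by (intro exI[of _ "x - tanh x"]) (simp add: lncosh_gap_has_real_derivative)
qed

lemma lncosh_gap_nonneg: "0 \<le> lncosh_gap s"
  using lncosh_gap_mono[of 0 "\<bar>s\<bar>"] by simp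

lemma lncosh_gap_ge_quartic:
  fixes s :: real assumes "0 \<le> s" "s \<le> 1" shows "s^4 / 27 \<le> lncosh_gap s"
proof -
  have "(\<lambda>x. lncosh_gap x - x^4 / 27) 0 \<le> (\<lambda>x. lncosh_gap x - x^4 / 27) s"
  proof (rule DERIV_nonneg_imp_nondecreasing[OF assms(1)])
    fix y :: real assume "0 \<le> y" "y \<le> s"
    then have "4 * y^3 / 27 \<le> y - tanh y"
      using assms by (intro cubic_le_self_minus_tanh) auto
    then show "\<exists>d. ((\<lambda>x. lncosh_gap x - x^4 / 27) has_real_derivative d) (at y) \<and> 0 \<le> d"
      by (intro exI[of _ "(y - tanh y) - 4 * y^3 / 27"])
         (auto intro!: derivative_eq_intros lncosh_gap_has_real_derivative)
  qed
  then show ?thesis by simp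
qed

lemma lncosh_gap_ge_quadratic:
  fixes s :: real assumes "1 \<le> s" shows "s\<^sup>2 / 108 \<le> lncosh_gap s"
proof -
  have "(\<lambda>x. lncosh_gap x - (x - 1)\<^sup>2 / 2) 1 \<le> (\<lambda>x. lncosh_gap x - (x - 1)\<^sup>2 / 2) s"
  proof (rule DERIV_nonneg_imp_nondecreasing[OF assms])
    fix y :: real
    have "0 \<le> (y - tanh y) - (y - 1)"
      using tanh_real_lt_1[of y] by simp
    then show "\<exists>d. ((\<lambda>x. lncosh_gap x - (x - 1)\<^sup>2 / 2) has_real_derivative d) (at y) \<and> 0 \<le> d"
      by (intro exI[of _ "(y - tanh y) - (2 * (y - 1) / 2)"])
         (auto intro!: derivative_eq_intros lncosh_gap_has_real_derivative)
  qed
  moreover have "1 / 27 \<le> lncosh_gap 1"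
    using lncosh_gap_ge_quartic[of 1] by simp
  moreover have "s\<^sup>2 / 108 \<le> 1 / 27 + (s - 1)\<^sup>2 / 2"
    using zero_le_power2[of "53 * s - 54"] by (simp add: power2_eq_square field_simps)
  ultimately show ?thesis by simp
qed

lemma lncosh_gap_scaled_ge:
  fixes y :: real and n :: nat assumes n: "n \<ge> 1"
  shows "(y\<^sup>2 - 1) / 108 \<le> real n * lncosh_gap (\<bar>y\<bar> * real n powr (-1/4))"
proof -
  define s where "s = \<bar>y\<bar> * real n powr (-1/4)"
  have s_nonneg: "0 \<le> s" unfolding s_def by simp
  have n_pos: "0 < real n" using n by simp
  have y_eq: "\<bar>y\<bar> = real n powr (1/4) * s"
    using n_pos by (simp add: s_def powr_minus field_simps)
  have y4: "y^4 = real n * s^4"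
  proof -
    have "y^4 = (real n powr (1/4))^4 * s^4"
      by (metis power_even_abs_numeral even_numeral y_eq power_mult_distrib)
    then show ?thesis using n_pos by (simp add: powr_power)
  qed
  have y2: "y\<^sup>2 \<le> real n * s\<^sup>2"
  proof -
    have "y\<^sup>2 = (real n powr (1/4))\<^sup>2 * s\<^sup>2"
      by (metis power2_abs y_eq power_mult_distrib)
    also have "\<dots> = real n powr (1/2) * s\<^sup>2"
      using n_pos by (simp add: powr_power)
    also have "\<dots> \<le> real n powr 1 * s\<^sup>2"
      using n by (intro mult_right_mono powr_mono) auto
    finally show ?thesis using n_pos by simp
  qed
  show ?thesis
  proof (cases "s \<le> 1")
    case True
    have "(y\<^sup>2 - 1) / 108 \<le> y^4 / 27"
      using zero_le_power2[of "2 * y\<^sup>2 - 1/4"] by (simp add: power2_eq_square power4_eq_xxxx field_simps)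
    also have "\<dots> = real n * (s^4 / 27)" using y4 by simp
    also have "\<dots> \<le> real n * lncosh_gap s"
      using lncosh_gap_ge_quartic[OF s_nonneg True] by (intro mult_left_mono) auto
    finally show ?thesis unfolding s_def .
  next
    case False
    have "(y\<^sup>2 - 1) / 108 \<le> real n * (s\<^sup>2 / 108)" using y2 by simp
    also have "\<dots> \<le> real n * lncosh_gap s"
      using lncosh_gap_ge_quadratic[of s] False by (intro mult_left_mono) auto
    finally show ?thesis unfolding s_def .
  qed
qed

lemma tendsto_scaled_lncosh_gap:
  assumes t: "t \<longlonglongrightarrow> 0" and scaled: "(\<lambda>n. real n powr (1/4) * t n) \<longlonglongrightarrow> L"
  shows "(\<lambda>n. real n * lncosh_gap (t n)) \<longlonglongrightarrow> L^4 / 12"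
proof -
  define \<phi> where "\<phi> s = (if s = 0 then 1/12 else lncosh_gap s / s^4)" for s
  have "(\<lambda>s. lncosh_gap s / s^4) = (\<lambda>s. (s\<^sup>2 / 2 - ln ((exp s + exp (-s)) / 2)) / s^4)"
    by (simp add: lncosh_gap_def cosh_def)
  moreover have "((\<lambda>s::real. (s\<^sup>2 / 2 - ln ((exp s + exp (-s)) / 2)) / s^4) \<longlongrightarrow> 1/12) (at 0)"
    by real_asymp
  ultimately have "((\<lambda>s. lncosh_gap s / s^4) \<longlongrightarrow> 1/12) (at 0)"
    by simp
  then have "(\<phi> \<longlongrightarrow> 1/12) (at 0)"
    by (rule Lim_transform_eventually) (simp add: eventually_at_filter \<phi>_def)
  then have "isCont \<phi> 0"
    by (simp add: isCont_def \<phi>_def)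
  then have "(\<lambda>n. \<phi> (t n) * (real n powr (1/4) * t n)^4) \<longlonglongrightarrow> \<phi> 0 * L^4"
    by (intro tendsto_intros isCont_tendsto_compose[OF _ t] scaled)
  moreover have "\<forall>\<^sub>F n in sequentially. \<phi> (t n) * (real n powr (1/4) * t n)^4 = real n * lncosh_gap (t n)"
    by (intro eventually_sequentiallyI[of 1]) (simp add: \<phi>_def power_mult_distrib powr_power)
  ultimately show ?thesis
    by (simp add: Lim_transform_eventually \<phi>_def)
qed

section \<open>Orthogonal matrices and quadratic forms\<close>

lemma orthonormal_rows_imp_orthonormal_cols:
  fixes V :: "nat \<Rightarrow> nat \<Rightarrow> real"
  assumes rows: "\<forall>i<m. \<forall>j<m. (\<Sum>l<m. V i l * V j l) = (if i = j then 1 else 0)"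
    and "j < m" "l < m"
  shows "(\<Sum>i<m. V i j * V i l) = (if j = l then 1 else 0)"
proof -
  define A where "A = mat m m (\<lambda>(i, j). V i j)"
  have A: "A \<in> carrier_mat m m" "transpose_mat A \<in> carrier_mat m m"
    unfolding A_def by simp_all
  have "A * transpose_mat A = 1\<^sub>m m"
  proof (rule eq_matI)
    fix i j assume "i < dim_row (1\<^sub>m m)" "j < dim_col (1\<^sub>m m)"
    then show "(A * transpose_mat A) $$ (i, j) = 1\<^sub>m m $$ (i, j)"
      using rows by (simp add: A_def scalar_prod_def lessThan_atLeast0)
  qed (simp_all add: A_def)
  then have "transpose_mat A * A = 1\<^sub>m m"
    by (rule mat_mult_left_right_inverse[OF A])
  then have "(transpose_mat A * A) $$ (j, l) = 1\<^sub>m m $$ (j, l)" by simp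
  then show ?thesis
    using \<open>j < m\<close> \<open>l < m\<close> by (simp add: A_def scalar_prod_def lessThan_atLeast0)
qed

lemma sum_square_orthogonal_transform:
  fixes V :: "nat \<Rightarrow> nat \<Rightarrow> real" and y :: "nat \<Rightarrow> real"
  assumes cols: "\<And>j l. j < m \<Longrightarrow> l < m \<Longrightarrow> (\<Sum>i<m. V i j * V i l) = (if j = l then 1 else 0)"
  shows "(\<Sum>i<m. (\<Sum>j<m. y j * V i j)\<^sup>2) = (\<Sum>j<m. (y j)\<^sup>2)"
proof -
  have "(\<Sum>i<m. (\<Sum>j<m. y j * V i j)\<^sup>2) = (\<Sum>i<m. \<Sum>j<m. \<Sum>l<m. y j * y l * (V i j * V i l))"
    by (simp add: power2_eq_square sum_product ac_simps)
  also have "\<dots> = (\<Sum>j<m. \<Sum>i<m. \<Sum>l<m. y j * y l * (V i j * V i l))"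
    by (rule sum.swap)
  also have "\<dots> = (\<Sum>j<m. \<Sum>l<m. \<Sum>i<m. y j * y l * (V i j * V i l))"
    by (rule sum.cong[OF refl], rule sum.swap)
  also have "\<dots> = (\<Sum>j<m. \<Sum>l<m. y j * y l * (\<Sum>i<m. V i j * V i l))"
    by (simp add: sum_distrib_left)
  also have "\<dots> = (\<Sum>j<m. (y j)\<^sup>2)"
    by (simp add: cols power2_eq_square if_distrib cong: if_cong)
  finally show ?thesis .
qed

lemma quadratic_form_diagonalize:
  fixes k V :: "nat \<Rightarrow> nat \<Rightarrow> real" and p \<Lambda> M :: "nat \<Rightarrow> real"
  assumes p: "\<forall>i<m. p i > 0"
    and decomp: "\<forall>i<m. \<forall>j<m. \<beta> * (sqrt (p i) * k i j * sqrt (p j)) = (\<Sum>l<m. V i l * \<Lambda> l * V j l)"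
  shows "\<beta> * (\<Sum>i<m. \<Sum>j<m. k i j * M i * M j) = (\<Sum>l<m. \<Lambda> l * (\<Sum>i<m. V i l * M i / sqrt (p i))\<^sup>2)"
proof -
  define y where "y i = M i / sqrt (p i)" for i
  have M: "M i = sqrt (p i) * y i" if "i < m" for i
  proof -
    have "p i > 0" using p that by simp
    then show ?thesis by (simp add: y_def)
  qed
  have "\<beta> * (\<Sum>i<m. \<Sum>j<m. k i j * M i * M j)
      = (\<Sum>i<m. \<Sum>j<m. y i * y j * (\<beta> * (sqrt (p i) * k i j * sqrt (p j))))"
    by (simp add: sum_distrib_left M ac_simps)
  also have "\<dots> = (\<Sum>i<m. \<Sum>j<m. \<Sum>l<m. \<Lambda> l * ((y i * V i l) * (y j * V j l)))"
    using decomp by (simp add: sum_distrib_left ac_simps)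
  also have "\<dots> = (\<Sum>i<m. \<Sum>l<m. \<Sum>j<m. \<Lambda> l * ((y i * V i l) * (y j * V j l)))"
    by (rule sum.cong[OF refl], rule sum.swap)
  also have "\<dots> = (\<Sum>l<m. \<Sum>i<m. \<Sum>j<m. \<Lambda> l * ((y i * V i l) * (y j * V j l)))"
    by (rule sum.swap)
  also have "\<dots> = (\<Sum>l<m. \<Lambda> l * (\<Sum>i<m. y i * V i l)\<^sup>2)"
  proof (rule sum.cong[OF refl])
    fix l
    have "(\<Sum>i<m. y i * V i l)\<^sup>2 = (\<Sum>i<m. \<Sum>j<m. (y i * V i l) * (y j * V j l))"
      by (simp add: power2_eq_square sum_product)
    then show "(\<Sum>i<m. \<Sum>j<m. \<Lambda> l * ((y i * V i l) * (y j * V j l))) = \<Lambda> l * (\<Sum>i<m. y i * V i l)\<^sup>2"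
      by (simp add: sum_distrib_left)
  qed
  finally show ?thesis
    by (simp add: y_def ac_simps)
qed

section \<open>Sums over spin configurations\<close>

lemma sum_symmetric_square:
  fixes A :: "nat \<Rightarrow> nat \<Rightarrow> real"
  assumes "\<And>v w. v < n \<Longrightarrow> w < n \<Longrightarrow> A v w = A w v"
  shows "(\<Sum>v<n. \<Sum>w<n. A v w) = 2 * (\<Sum>v<n. \<Sum>w<v. A v w) + (\<Sum>v<n. A v v)"
  using assms
proof (induction n)
  case (Suc n)
  have sym: "A v w = A w v" if "v < Suc n" "w < Suc n" for v w
    by (rule Suc.prems) (use that in auto)
  have "(\<Sum>v<Suc n. \<Sum>w<Suc n. A v w)
      = (\<Sum>v<n. \<Sum>w<n. A v w) + (\<Sum>v<n. A v n) + (\<Sum>w<n. A n w) + A n n"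
    by (simp add: sum.distrib)
  also have "(\<Sum>v<n. \<Sum>w<n. A v w) = 2 * (\<Sum>v<n. \<Sum>w<v. A v w) + (\<Sum>v<n. A v v)"
    by (rule Suc.IH, rule sym) auto
  also have "(\<Sum>v<n. A v n) = (\<Sum>w<n. A n w)"
    by (intro sum.cong refl sym) auto
  finally show ?case
    by simp
qed simp

lemma sum_config_set_exp:
  "(\<Sum>s\<in>config_set n. exp (\<Sum>v<n. s v * c v)) = (\<Prod>v<n. 2 * cosh (c v))"
proof -
  have "(\<Prod>v<n. 2 * cosh (c v)) = (\<Prod>v<n. \<Sum>t\<in>{-1, 1::real}. exp (t * c v))"
    by (simp add: cosh_field_def add_divide_distrib add.commute)
  also have "\<dots> = (\<Sum>s\<in>PiE {..<n} (\<lambda>_. {-1, 1::real}). \<Prod>v<n. exp (s v * c v))"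
    by (rule prod_sum_PiE) auto
  finally show ?thesis
    by (simp add: config_set_def exp_sum)
qed

lemma sum_by_blocks:
  assumes "\<forall>v<n. g v < m"
  shows "(\<Sum>v<n. F (g v) * s v) = (\<Sum>i<m. F i * block_mag n g s i)"
proof -
  have "(\<Sum>v<n. F (g v) * s v) = (\<Sum>i<m. \<Sum>v\<in>{v \<in> {..<n}. g v = i}. F (g v) * s v)"
    using assms by (intro sum.group[symmetric]) auto
  also have "\<dots> = (\<Sum>i<m. F i * block_mag n g s i)"
    by (auto simp: block_mag_def sum_distrib_left intro!: sum.cong)
  finally show ?thesis .
qed

lemma sum_const_on_blocks:
  fixes g :: "nat \<Rightarrow> nat"
  assumes "\<forall>v<n. g v < m"
  shows "(\<Sum>v<n. F (g v)) = (\<Sum>i<m. real (card {v. v < n \<and> g v = i}) * F i)"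
  using sum_by_blocks[OF assms, of F "\<lambda>_. 1"] by (simp add: block_mag_def mult.commute)

lemma sum_quadratic_by_blocks:
  assumes g: "\<forall>v<n. g v < m"
  shows "(\<Sum>v<n. \<Sum>w<n. k (g v) (g w) * s v * s w)
       = (\<Sum>i<m. \<Sum>j<m. k i j * block_mag n g s i * block_mag n g s j)"
proof -
  have "(\<Sum>w<n. k (g v) (g w) * s v * s w) = (\<Sum>j<m. k (g v) j * block_mag n g s j) * s v" for v
  proof -
    have "(\<Sum>w<n. k (g v) (g w) * s v * s w) = s v * (\<Sum>w<n. k (g v) (g w) * s w)"
      by (simp add: sum_distrib_left ac_simps)
    also have "\<dots> = s v * (\<Sum>j<m. k (g v) j * block_mag n g s j)"
      using sum_by_blocks[OF g, of "k (g v)" s] by simp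
    finally show ?thesis
      by (simp only: mult.commute)
  qed
  then have "(\<Sum>v<n. \<Sum>w<n. k (g v) (g w) * s v * s w)
      = (\<Sum>v<n. (\<Sum>j<m. k (g v) j * block_mag n g s j) * s v)"
    by simp
  also have "\<dots> = (\<Sum>i<m. (\<Sum>j<m. k i j * block_mag n g s j) * block_mag n g s i)"
    by (rule sum_by_blocks[OF g])
  finally show ?thesis
    by (simp add: sum_distrib_left sum_distrib_right ac_simps)
qed

lemma interaction_block_form:
  assumes g: "\<forall>v<n. g v < m" and k_sym: "\<forall>i<m. \<forall>j<m. k i j = k j i"
    and s: "s \<in> config_set n"
  shows "interaction n g k s
    = ((\<Sum>i<m. \<Sum>j<m. k i j * block_mag n g s i * block_mag n g s j) - (\<Sum>v<n. k (g v) (g v)))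
      / (2 * real n)"
proof -
  define A where "A v w = k (g v) (g w) * s v * s w" for v w
  define Q where "Q = (\<Sum>i<m. \<Sum>j<m. k i j * block_mag n g s i * block_mag n g s j)"
  define D where "D = (\<Sum>v<n. k (g v) (g v))"
  define S where "S = (\<Sum>v<n. \<Sum>w<v. A v w)"
  have "(\<Sum>v<n. \<Sum>w<n. A v w) = 2 * S + (\<Sum>v<n. A v v)"
    unfolding S_def
  proof (rule sum_symmetric_square)
    fix v w assume "v < n" "w < n"
    then have "k (g v) (g w) = k (g w) (g v)" using g k_sym by blast
    then show "A v w = A w v" by (simp add: A_def)
  qed
  moreover have "(\<Sum>v<n. A v v) = D"
  proof -
    have "s v * s v = 1" if "v < n" for v
      using s that by (auto simp: config_set_def PiE_def Pi_def)
    then show ?thesis by (simp add: D_def A_def mult.assoc)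
  qed
  moreover have "(\<Sum>v<n. \<Sum>w<n. A v w) = Q"
    unfolding A_def Q_def using g by (rule sum_quadratic_by_blocks)
  ultimately have "S = (Q - D) / 2"
    by simp
  moreover have "interaction n g k s = S / real n"
    by (simp add: interaction_def S_def A_def sum_divide_distrib)
  ultimately have "interaction n g k s = (Q - D) / 2 / real n"
    by (simp only:)
  then show ?thesis
    by (simp add: Q_def D_def)
qed

section \<open>Gaussian measures on $\mathbb{R}^m$\<close>

lemma normal_density_precision:
  assumes "0 < c"
  shows "normal_density \<mu> (1 / sqrt c) y = sqrt (c / (2 * pi)) * exp (- (c * (y - \<mu>)\<^sup>2) / 2)"
proof -
  have "1 / sqrt (2 * pi * (1 / sqrt c)\<^sup>2) = sqrt (c / (2 * pi))"
    using assms by (simp add: power_divide real_sqrt_divide)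
  moreover have "- ((y - \<mu>)\<^sup>2) / (2 * (1 / sqrt c)\<^sup>2) = - (c * (y - \<mu>)\<^sup>2) / 2"
    using assms by (simp add: power_divide field_simps)
  ultimately show ?thesis
    unfolding normal_density_def by simp
qed

lemma integrable_exp_neg_square:
  fixes c :: real assumes "0 < c"
  shows "integrable lborel (\<lambda>y. exp (- c * y\<^sup>2))"
proof -
  have "integrable lborel (\<lambda>y. normal_density 0 (1 / sqrt (2 * c)) y / sqrt (2 * c / (2 * pi)))"
    using assms by (intro integrable_divide integrable_normal_density) simp
  then show ?thesis
    using assms by (simp add: normal_density_precision)
qed

lemma prod_normal_density_precision:
  fixes c u x :: "nat \<Rightarrow> real"
  assumes "\<And>j. j < m \<Longrightarrow> 0 < c j"
  shows "(\<Prod>j<m. normal_density (u j) (1 / sqrt (c j)) (x j))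
       = (\<Prod>j<m. sqrt (c j / (2 * pi))) * exp (- (1/2) * (\<Sum>j<m. c j * (x j - u j)\<^sup>2))"
proof -
  have "(\<Prod>j<m. normal_density (u j) (1 / sqrt (c j)) (x j))
      = (\<Prod>j<m. sqrt (c j / (2 * pi)) * exp (- (1/2) * (c j * (x j - u j)\<^sup>2)))"
    using assms by (intro prod.cong refl) (simp add: normal_density_precision)
  also have "\<dots> = (\<Prod>j<m. sqrt (c j / (2 * pi))) * (\<Prod>j<m. exp (- (1/2) * (c j * (x j - u j)\<^sup>2)))"
    by (rule prod.distrib)
  also have "(\<Prod>j<m. exp (- (1/2) * (c j * (x j - u j)\<^sup>2))) = exp (\<Sum>j<m. - (1/2) * (c j * (x j - u j)\<^sup>2))"
    by (rule exp_sum[symmetric]) simp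
  finally show ?thesis
    by (simp add: sum_distrib_left)
qed

lemma distr_normal_shift:
  fixes s u :: real assumes "0 < s"
  shows "distr (density lborel (normal_density 0 s)) lborel (\<lambda>y. u + y) = density lborel (normal_density u s)"
proof -
  interpret prob_space "density lborel (normal_density 0 s)"
    using assms by (rule prob_space_normal_density)
  have "distributed (density lborel (normal_density 0 s)) lborel (\<lambda>x. x) (normal_density 0 s)"
    by (auto simp: distributed_def distr_id2)
  from normal_density_affine[OF this assms, of 1 u]
  show ?thesis
    by (simp add: distributed_def)
qed

text \<open>An index-dependent version of distr_PiM_finite_prob_space'.\<close>

lemma distr_PiM_componentwise:
  fixes f :: "'i \<Rightarrow> 'a \<Rightarrow> 'b"
  assumes I: "finite I"
    and M: "\<And>i. i \<in> I \<Longrightarrow> prob_space (M i)"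
    and f: "\<And>i. i \<in> I \<Longrightarrow> f i \<in> M i \<rightarrow>\<^sub>M N i"
  shows "distr (PiM I M) (PiM I N) (\<lambda>x. \<lambda>i\<in>I. f i (x i)) = PiM I (\<lambda>i. distr (M i) (N i) (f i))"
proof -
  define M' where "M' i = (if i \<in> I then M i else return (count_space UNIV) undefined)" for i
  define D where "D i = (if i \<in> I then distr (M i) (N i) (f i) else return (count_space UNIV) undefined)" for i
  interpret M': product_prob_space M'
    by (rule product_prob_spaceI) (auto simp: M'_def intro!: prob_space_return M)
  interpret D: product_prob_space D
    by (rule product_prob_spaceI) (auto simp: D_def intro!: prob_space_return prob_space.prob_space_distr M f)
  have [simp]: "PiM I M' = PiM I M" "PiM I D = PiM I (\<lambda>i. distr (M i) (N i) (f i))"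
    by (intro PiM_cong; simp add: M'_def D_def)+
  have fm: "(\<lambda>x. \<lambda>i\<in>I. f i (x i)) \<in> PiM I M \<rightarrow>\<^sub>M PiM I N"
    using f by (intro measurable_restrict) (auto intro: measurable_compose[OF measurable_component_singleton])
  have "distr (PiM I M') (PiM I N) (\<lambda>x. \<lambda>i\<in>I. f i (x i)) = PiM I D"
  proof (rule D.PiM_eqI[OF I])
    show "sets (distr (PiM I M') (PiM I N) (\<lambda>x. \<lambda>i\<in>I. f i (x i))) = sets (PiM I D)"
      by (auto simp: D_def intro!: sets_PiM_cong)
  next
    fix A assume A: "\<And>i. i \<in> I \<Longrightarrow> A i \<in> sets (D i)"
    then have A': "A i \<in> sets (N i)" if "i \<in> I" for i
      using that by (simp add: D_def)
    have "PiE I A \<in> sets (PiM I N)"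
      using A' I by (intro sets_PiM_I_finite) auto
    moreover have "(\<lambda>x. \<lambda>i\<in>I. f i (x i)) -` PiE I A \<inter> space (PiM I M) = PiE I (\<lambda>i. f i -` A i \<inter> space (M i))"
      by (auto simp: space_PiM PiE_def Pi_def extensional_def)
    ultimately have "emeasure (distr (PiM I M') (PiM I N) (\<lambda>x. \<lambda>i\<in>I. f i (x i))) (PiE I A)
        = emeasure (PiM I M) (PiE I (\<lambda>i. f i -` A i \<inter> space (M i)))"
      using fm by (simp add: emeasure_distr)
    also have "\<dots> = (\<Prod>i\<in>I. emeasure (M' i) (f i -` A i \<inter> space (M i)))"
      using A' f I by (subst M'.emeasure_PiM[symmetric]) (auto simp: M'_def measurable_sets)
    also have "\<dots> = (\<Prod>i\<in>I. emeasure (D i) (A i))"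
      using A' f by (intro prod.cong refl) (simp add: M'_def D_def emeasure_distr)
    finally show "emeasure (distr (PiM I M') (PiM I N) (\<lambda>x. \<lambda>i\<in>I. f i (x i))) (PiE I A)
        = (\<Prod>i\<in>I. emeasure (D i) (A i))" .
  qed
  then show ?thesis by simp
qed

lemma PiM_density:
  fixes g :: "'i \<Rightarrow> real \<Rightarrow> real"
  assumes I: "finite I" and g: "\<And>i. i \<in> I \<Longrightarrow> g i \<in> borel_measurable lborel"
    and nonneg: "\<And>i x. i \<in> I \<Longrightarrow> 0 \<le> g i x"
    and prob: "\<And>i. i \<in> I \<Longrightarrow> prob_space (density lborel (g i))"
  shows "PiM I (\<lambda>i. density lborel (g i)) = density (PiM I (\<lambda>_. lborel)) (\<lambda>x. \<Prod>i\<in>I. g i (x i))"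
proof -
  define N where "N i = (if i \<in> I then density lborel (g i) else lborel)" for i
  have [simp]: "PiM I N = PiM I (\<lambda>i. density lborel (g i))"
    by (rule PiM_cong) (auto simp: N_def)
  interpret N: product_sigma_finite N
    by (intro product_sigma_finite.intro)
       (auto simp: N_def intro: prob_space_imp_sigma_finite prob sigma_finite_lborel)
  interpret L: product_sigma_finite "\<lambda>_. lborel :: real measure"
    by (intro product_sigma_finite.intro sigma_finite_lborel)
  have gm: "(\<lambda>x. g i (x i)) \<in> borel_measurable (PiM I (\<lambda>_. lborel))" if "i \<in> I" for i
    using measurable_compose[OF measurable_component_singleton[of i I "\<lambda>_. lborel"] g] that by simp
  have "density (PiM I (\<lambda>_. lborel)) (\<lambda>x. \<Prod>i\<in>I. g i (x i)) = PiM I N"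
  proof (rule N.PiM_eqI[OF I])
    show "sets (density (PiM I (\<lambda>_. lborel)) (\<lambda>x. \<Prod>i\<in>I. g i (x i))) = sets (PiM I N)"
      by (auto intro!: sets_PiM_cong simp: N_def)
  next
    fix A assume "\<And>i. i \<in> I \<Longrightarrow> A i \<in> sets (N i)"
    then have A: "A i \<in> sets lborel" if "i \<in> I" for i
      using that by (simp add: N_def)
    have "emeasure (density (PiM I (\<lambda>_. lborel)) (\<lambda>x. \<Prod>i\<in>I. g i (x i))) (PiE I A)
        = (\<integral>\<^sup>+ x. ennreal (\<Prod>i\<in>I. g i (x i)) * indicator (PiE I A) x \<partial>PiM I (\<lambda>_. lborel))"
      using A I gm by (intro emeasure_density borel_measurable_prod sets_PiM_I_finite) auto
    also have "\<dots> = (\<integral>\<^sup>+ x. (\<Prod>i\<in>I. ennreal (g i (x i)) * indicator (A i) (x i)) \<partial>PiM I (\<lambda>_. lborel))"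
    proof (rule nn_integral_cong)
      fix x assume "x \<in> space (PiM I (\<lambda>_. lborel :: real measure))"
      then have "indicator (PiE I A) x = (\<Prod>i\<in>I. indicator (A i) (x i) :: ennreal)"
        using I by (auto simp: space_PiM indicator_def PiE_def Pi_def)
      then show "ennreal (\<Prod>i\<in>I. g i (x i)) * indicator (PiE I A) x
          = (\<Prod>i\<in>I. ennreal (g i (x i)) * indicator (A i) (x i))"
        using nonneg by (simp add: prod_ennreal prod.distrib)
    qed
    also have "\<dots> = (\<Prod>i\<in>I. \<integral>\<^sup>+ y. ennreal (g i y) * indicator (A i) y \<partial>lborel)"
      using I A g by (intro L.product_nn_integral_prod) auto
    also have "\<dots> = (\<Prod>i\<in>I. emeasure (N i) (A i))"
      using A g by (intro prod.cong refl) (simp add: N_def emeasure_density)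
    finally show "emeasure (density (PiM I (\<lambda>_. lborel)) (\<lambda>x. \<Prod>i\<in>I. g i (x i))) (PiE I A)
        = (\<Prod>i\<in>I. emeasure (N i) (A i))" .
  qed
  then show ?thesis by simp
qed

lemma space_Rm: "space (Rm m) = PiE {..<m} (\<lambda>_. UNIV)"
  by (simp add: Rm_def space_PiM)

lemma measurable_Rm_component [measurable]: "j < m \<Longrightarrow> (\<lambda>x. x j) \<in> borel_measurable (Rm m)"
  unfolding Rm_def by (simp add: measurable_component_singleton)

lemma continuous_on_coordinate [continuous_intros]:
  "continuous_on S (\<lambda>x :: 'i \<Rightarrow> 'b :: topological_space. x i)"
  by (rule continuous_on_subset[OF continuous_on_product_coordinates]) simp

lemma borel_measurable_continuous_on_Rm:
  fixes f :: "(nat \<Rightarrow> real) \<Rightarrow> real"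
  assumes f: "continuous_on (space (Rm m)) f"
  shows "f \<in> borel_measurable (Rm m)"
proof -
  have "(\<lambda>x. x) \<in> Rm m \<rightarrow>\<^sub>M PiM UNIV (\<lambda>_. borel :: real measure)"
  proof (rule measurable_PiM_single')
    fix i :: nat
    show "(\<lambda>x. x i) \<in> borel_measurable (Rm m)"
    proof (cases "i < m")
      case False
      then have "x i = undefined" if "x \<in> space (Rm m)" for x
        using that by (auto simp: space_Rm PiE_def extensional_def)
      then show ?thesis
        by (subst measurable_cong[where g = "\<lambda>_. undefined"]) auto
    qed simp
  qed simp
  then have id: "(\<lambda>x. x) \<in> Rm m \<rightarrow>\<^sub>M (borel :: (nat \<Rightarrow> real) measure)"
    by (simp add: measurable_cong_sets[OF refl sets_PiM_equal_borel])
  have restrict: "continuous_on UNIV (\<lambda>x::nat \<Rightarrow> real. restrict x {..<m})"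
  proof (rule continuous_on_coordinatewise_then_product)
    fix i
    show "continuous_on UNIV (\<lambda>x::nat \<Rightarrow> real. restrict x {..<m} i)"
      by (cases "i < m") (auto simp: restrict_def)
  qed
  have "restrict x {..<m} \<in> space (Rm m)" for x :: "nat \<Rightarrow> real"
    by (simp add: space_Rm)
  then have "continuous_on UNIV (f \<circ> (\<lambda>x. restrict x {..<m}))"
    by (intro continuous_on_compose[OF restrict] continuous_on_subset[OF f]) auto
  then have "(\<lambda>x. f (restrict x {..<m})) \<in> borel_measurable (Rm m)"
    using measurable_compose[OF id borel_measurable_continuous_onI] by (simp add: comp_def)
  then show ?thesis
    by (rule measurable_cong[THEN iffD1, rotated]) (simp add: space_Rm PiE_restrict)
qed

lemma prob_space_gaussian_diag: "\<forall>j<m. 0 < c j \<Longrightarrow> prob_space (gaussian_diag m c)"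
  unfolding gaussian_diag_def by (intro prob_space_PiM prob_space_normal_density) auto

lemma distr_gaussian_diag_shift:
  assumes c: "\<forall>j<m. 0 < c j"
  shows "distr (gaussian_diag m c) (Rm m) (\<lambda>y. \<lambda>j\<in>{..<m}. u j + y j)
       = density (Rm m) (\<lambda>x. \<Prod>j<m. normal_density (u j) (1 / sqrt (c j)) (x j))"
proof -
  have "distr (gaussian_diag m c) (Rm m) (\<lambda>y. \<lambda>j\<in>{..<m}. u j + y j)
      = PiM {..<m} (\<lambda>j. distr (density lborel (normal_density 0 (1 / sqrt (c j)))) lborel (\<lambda>y. u j + y))"
    unfolding gaussian_diag_def Rm_def
    using c by (intro distr_PiM_componentwise) (auto intro: prob_space_normal_density)
  also have "\<dots> = PiM {..<m} (\<lambda>j. density lborel (normal_density (u j) (1 / sqrt (c j))))"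
    using c by (intro PiM_cong refl) (simp add: distr_normal_shift)
  also have "\<dots> = density (Rm m) (\<lambda>x. \<Prod>j<m. normal_density (u j) (1 / sqrt (c j)) (x j))"
    unfolding Rm_def using c by (intro PiM_density) (auto intro: prob_space_normal_density)
  finally show ?thesis .
qed

lemma emeasure_distr_weighted_pair:
  assumes C: "finite C" and w: "\<And>s. s \<in> C \<Longrightarrow> 0 \<le> w s" and "sigma_finite_measure \<gamma>"
    and \<Phi>: "\<Phi> \<in> count_space C \<Otimes>\<^sub>M \<gamma> \<rightarrow>\<^sub>M N" and A: "A \<in> sets N"
  shows "emeasure (distr (density (count_space C) (\<lambda>s. ennreal (w s)) \<Otimes>\<^sub>M \<gamma>) N \<Phi>) A
       = (\<Sum>s\<in>C. ennreal (w s) * emeasure (distr \<gamma> N (\<lambda>y. \<Phi> (s, y))) A)"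
proof -
  interpret \<gamma>: sigma_finite_measure \<gamma> by fact
  define P where "P = density (count_space C) (\<lambda>s. ennreal (w s)) \<Otimes>\<^sub>M \<gamma>"
  have sets_P: "sets P = sets (count_space C \<Otimes>\<^sub>M \<gamma>)"
    unfolding P_def by (rule sets_pair_measure_cong[OF sets_density refl])
  have \<Phi>': "\<Phi> \<in> P \<rightarrow>\<^sub>M N"
    using \<Phi> by (simp only: measurable_cong_sets[OF sets_P refl])
  have "emeasure (distr P N \<Phi>) A = emeasure P (\<Phi> -` A \<inter> space P)"
    using \<Phi>' A by (rule emeasure_distr)
  also have "\<dots> = (\<integral>\<^sup>+ s. emeasure \<gamma> (Pair s -` (\<Phi> -` A \<inter> space P)) \<partial>density (count_space C) (\<lambda>s. ennreal (w s)))"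
    unfolding P_def using measurable_sets[OF \<Phi>' A] by (intro \<gamma>.emeasure_pair_measure_alt) (simp add: P_def)
  also have "\<dots> = (\<Sum>s\<in>C. ennreal (w s) * emeasure (distr \<gamma> N (\<lambda>y. \<Phi> (s, y))) A)"
  proof -
    have "Pair s -` (\<Phi> -` A \<inter> space P) = (\<lambda>y. \<Phi> (s, y)) -` A \<inter> space \<gamma>" if "s \<in> C" for s
      using that by (auto simp: P_def space_pair_measure)
    moreover have "emeasure \<gamma> ((\<lambda>y. \<Phi> (s, y)) -` A \<inter> space \<gamma>) = emeasure (distr \<gamma> N (\<lambda>y. \<Phi> (s, y))) A"
      if "s \<in> C" for s
      using measurable_Pair2[OF \<Phi>] that A by (simp add: emeasure_distr)
    ultimately show ?thesis
      using C by (simp add: nn_integral_density nn_integral_count_space_finite)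
  qed
  finally show ?thesis
    by (simp add: P_def)
qed

lemma emeasure_density_weighted_sum:
  fixes \<rho> :: "'c \<Rightarrow> 'a \<Rightarrow> real"
  assumes C: "finite C" and w: "\<And>s. s \<in> C \<Longrightarrow> 0 \<le> w s"
    and \<rho>: "\<And>s. \<rho> s \<in> borel_measurable M" "\<And>s x. 0 \<le> \<rho> s x" and A: "A \<in> sets M"
  shows "(\<Sum>s\<in>C. ennreal (w s) * emeasure (density M (\<rho> s)) A)
       = emeasure (density M (\<lambda>x. \<Sum>s\<in>C. w s * \<rho> s x)) A"
proof -
  have "(\<Sum>s\<in>C. ennreal (w s) * emeasure (density M (\<rho> s)) A)
      = (\<Sum>s\<in>C. \<integral>\<^sup>+ x. ennreal (w s * \<rho> s x) * indicator A x \<partial>M)"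
    using A \<rho> w by (intro sum.cong refl)
      (auto simp: emeasure_density nn_integral_cmult[symmetric] ennreal_mult mult.assoc intro!: nn_integral_cong)
  also have "\<dots> = (\<integral>\<^sup>+ x. ennreal (\<Sum>s\<in>C. w s * \<rho> s x) * indicator A x \<partial>M)"
    using A \<rho> w by (subst nn_integral_sum[symmetric])
      (auto simp: sum_distrib_right[symmetric] sum_ennreal intro!: nn_integral_cong)
  also have "\<dots> = emeasure (density M (\<lambda>x. \<Sum>s\<in>C. w s * \<rho> s x)) A"
  proof -
    have "(\<lambda>x. \<Sum>s\<in>C. w s * \<rho> s x) \<in> borel_measurable M"
      using \<rho> by (intro borel_measurable_sum borel_measurable_times) auto
    then show ?thesis
      by (intro emeasure_density[symmetric] measurable_compose[OF _ measurable_ennreal] A)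
  qed
  finally show ?thesis .
qed

lemma measurable_add_component:
  fixes \<sigma> :: "'a \<Rightarrow> 'c" and u :: "'c \<Rightarrow> nat \<Rightarrow> real"
  assumes \<sigma>: "\<sigma> \<in> \<Omega> \<rightarrow>\<^sub>M count_space C" and Y: "Y \<in> \<Omega> \<rightarrow>\<^sub>M Rm m"
  shows "(\<lambda>\<omega>. \<lambda>j\<in>{..<m}. u (\<sigma> \<omega>) j + Y \<omega> j) \<in> \<Omega> \<rightarrow>\<^sub>M Rm m"
proof -
  have "(\<lambda>s. u s j) \<in> count_space C \<rightarrow>\<^sub>M (borel :: real measure)" for j
    by (simp add: measurable_count_space_eq1)
  then have "(\<lambda>\<omega>. u (\<sigma> \<omega>) j) \<in> borel_measurable \<Omega>" for j
    using \<sigma> by (rule measurable_compose[rotated])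
  moreover have "(\<lambda>\<omega>. Y \<omega> j) \<in> borel_measurable \<Omega>" if "j < m" for j
    using measurable_compose[OF Y measurable_Rm_component[OF that]] .
  ultimately show ?thesis
    unfolding Rm_def by (intro measurable_restrict) auto
qed

lemma (in prob_space) distr_indep_var_pair:
  assumes "indep_var M\<^sub>1 X M\<^sub>2 Y" and \<Phi>: "\<Phi> \<in> M\<^sub>1 \<Otimes>\<^sub>M M\<^sub>2 \<rightarrow>\<^sub>M N"
  shows "distr M N (\<lambda>\<omega>. \<Phi> (X \<omega>, Y \<omega>)) = distr (distr M M\<^sub>1 X \<Otimes>\<^sub>M distr M M\<^sub>2 Y) N \<Phi>"
proof -
  from assms(1) have X: "X \<in> M \<rightarrow>\<^sub>M M\<^sub>1" and Y: "Y \<in> M \<rightarrow>\<^sub>M M\<^sub>2"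
    and pair: "distr M M\<^sub>1 X \<Otimes>\<^sub>M distr M M\<^sub>2 Y = distr M (M\<^sub>1 \<Otimes>\<^sub>M M\<^sub>2) (\<lambda>\<omega>. (X \<omega>, Y \<omega>))"
    by (auto simp: indep_var_distribution_eq)
  show ?thesis
    using distr_distr[OF \<Phi> measurable_Pair[OF X Y]] by (simp add: pair comp_def)
qed

lemma distr_add_indep_gaussian:
  fixes \<Omega> :: "'a measure" and \<sigma> Y :: "'a \<Rightarrow> nat \<Rightarrow> real"
    and u :: "(nat \<Rightarrow> real) \<Rightarrow> nat \<Rightarrow> real"
  assumes "prob_space \<Omega>" and C: "finite C" and w: "\<And>s. s \<in> C \<Longrightarrow> 0 \<le> w s"
    and \<sigma>_law: "distr \<Omega> (count_space C) \<sigma> = density (count_space C) (\<lambda>s. ennreal (w s))"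
    and Y_law: "distr \<Omega> (Rm m) Y = gaussian_diag m c" and c: "\<forall>j<m. 0 < c j"
    and indep: "prob_space.indep_var \<Omega> (count_space C) \<sigma> (Rm m) Y"
  shows "distr \<Omega> (Rm m) (\<lambda>\<omega>. \<lambda>j\<in>{..<m}. u (\<sigma> \<omega>) j + Y \<omega> j)
       = density (Rm m) (\<lambda>x. \<Sum>s\<in>C. w s * (\<Prod>j<m. normal_density (u s j) (1 / sqrt (c j)) (x j)))"
proof -
  define \<rho> where "\<rho> s x = (\<Prod>j<m. normal_density (u s j) (1 / sqrt (c j)) (x j))" for s x
  define \<Phi> where "\<Phi> = (\<lambda>(s, y). \<lambda>j\<in>{..<m}. u s j + (y :: nat \<Rightarrow> real) j)"
  have \<Phi>: "\<Phi> \<in> count_space C \<Otimes>\<^sub>M Rm m \<rightarrow>\<^sub>M Rm m"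
    unfolding \<Phi>_def Rm_def using C by (intro measurable_pair_measure_countable1 countable_finite) simp_all
  have "sets (gaussian_diag m c) = sets (Rm m)"
    unfolding gaussian_diag_def Rm_def by (intro sets_PiM_cong) simp_all
  then have sets_pair: "sets (count_space C \<Otimes>\<^sub>M gaussian_diag m c) = sets (count_space C \<Otimes>\<^sub>M Rm m)"
    by (rule sets_pair_measure_cong[OF refl])
  have \<Phi>': "\<Phi> \<in> count_space C \<Otimes>\<^sub>M gaussian_diag m c \<rightarrow>\<^sub>M Rm m"
    using \<Phi> by (simp only: measurable_cong_sets[OF sets_pair refl])
  have law: "distr \<Omega> (Rm m) (\<lambda>\<omega>. \<lambda>j\<in>{..<m}. u (\<sigma> \<omega>) j + Y \<omega> j)
      = distr (density (count_space C) (\<lambda>s. ennreal (w s)) \<Otimes>\<^sub>M gaussian_diag m c) (Rm m) \<Phi>"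
    using prob_space.distr_indep_var_pair[OF \<open>prob_space \<Omega>\<close> indep \<Phi>] \<sigma>_law Y_law by (simp add: \<Phi>_def)
  have shift: "distr (gaussian_diag m c) (Rm m) (\<lambda>y. \<Phi> (s, y)) = density (Rm m) (\<rho> s)" for s
    unfolding \<rho>_def \<Phi>_def using c by (simp add: distr_gaussian_diag_shift)
  have \<rho>: "\<rho> s \<in> borel_measurable (Rm m)" for s
    unfolding \<rho>_def by measurable
  show ?thesis
  proof (rule measure_eqI)
    fix A assume "A \<in> sets (distr \<Omega> (Rm m) (\<lambda>\<omega>. \<lambda>j\<in>{..<m}. u (\<sigma> \<omega>) j + Y \<omega> j))"
    then have A: "A \<in> sets (Rm m)" by simp
    have \<gamma>: "sigma_finite_measure (gaussian_diag m c)"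
      using c by (intro prob_space_imp_sigma_finite prob_space_gaussian_diag)
    show "emeasure (distr \<Omega> (Rm m) (\<lambda>\<omega>. \<lambda>j\<in>{..<m}. u (\<sigma> \<omega>) j + Y \<omega> j)) A
        = emeasure (density (Rm m) (\<lambda>x. \<Sum>s\<in>C. w s * (\<Prod>j<m. normal_density (u s j) (1 / sqrt (c j)) (x j)))) A"
      unfolding law \<rho>_def[symmetric] using C w A \<rho>
      by (simp add: emeasure_distr_weighted_pair[OF C w \<gamma> \<Phi>' A] shift
          emeasure_density_weighted_sum \<rho>_def prod_nonneg)
  qed simp
qed

section \<open>Weak convergence of normalized densities\<close>

lemma density_scaled_eq_normalized:
  fixes q :: "'a \<Rightarrow> real"
  assumes prob: "prob_space (density M (\<lambda>x. ennreal (\<kappa> * q x)))"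
    and q: "q \<in> borel_measurable M" and q_nonneg: "\<And>x. x \<in> space M \<Longrightarrow> 0 \<le> q x" and "0 < \<kappa>"
  shows "density M (\<lambda>x. ennreal (\<kappa> * q x)) = density M (\<lambda>x. ennreal (q x / (\<integral>y. q y \<partial>M)))"
proof -
  have "(1::real) = (\<integral>x. 1 \<partial>density M (\<lambda>x. ennreal (\<kappa> * q x)))"
    using prob_space.prob_space[OF prob] by simp
  also have "\<dots> = \<kappa> * (\<integral>x. q x \<partial>M)"
    using q q_nonneg \<open>0 < \<kappa>\<close> by (subst integral_density) auto
  finally have "(\<integral>x. q x \<partial>M) = 1 / \<kappa>"
    using \<open>0 < \<kappa>\<close> by (simp add: field_simps)
  then show ?thesis
    by (simp add: mult.commute)
qed

lemma integral_normalized_density: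
  fixes q f :: "'a \<Rightarrow> real"
  assumes "q \<in> borel_measurable M" "\<And>x. x \<in> space M \<Longrightarrow> 0 \<le> q x" "f \<in> borel_measurable M"
  shows "(\<integral>x. f x \<partial>density M (\<lambda>x. ennreal (q x / (\<integral>y. q y \<partial>M))))
       = (\<integral>x. q x * f x \<partial>M) / (\<integral>x. q x \<partial>M)"
  using assms by (subst integral_density) (auto simp: integral_nonneg_AE)

lemma tendsto_integral_normalized_density:
  fixes q :: "nat \<Rightarrow> 'a \<Rightarrow> real" and \<rho> H f :: "'a \<Rightarrow> real"
  assumes q: "\<And>n. q n \<in> borel_measurable M" "\<And>n x. x \<in> space M \<Longrightarrow> 0 \<le> q n x"
    and \<rho>_lim: "\<rho> \<in> borel_measurable M" "\<And>x. x \<in> space M \<Longrightarrow> (\<lambda>n. q n x) \<longlonglongrightarrow> \<rho> x"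
    and H: "integrable M H" "\<forall>\<^sub>F n in sequentially. \<forall>x\<in>space M. q n x \<le> H x"
    and \<rho>_int: "(\<integral>x. \<rho> x \<partial>M) \<noteq> 0"
    and f: "f \<in> borel_measurable M" "\<And>x. x \<in> space M \<Longrightarrow> \<bar>f x\<bar> \<le> B"
  shows "(\<lambda>n. \<integral>x. f x \<partial>density M (\<lambda>x. ennreal (q n x / (\<integral>y. q n y \<partial>M))))
         \<longlonglongrightarrow> (\<integral>x. f x \<partial>density M (\<lambda>x. ennreal (\<rho> x / (\<integral>y. \<rho> y \<partial>M))))"
proof -
  obtain N where N: "\<And>n x. N \<le> n \<Longrightarrow> x \<in> space M \<Longrightarrow> q n x \<le> H x"
    using H(2) by (auto simp: eventually_sequentially)
  have \<rho>_nonneg: "0 \<le> \<rho> x" if "x \<in> space M" for x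
    using q(2) that by (intro LIMSEQ_le_const[OF \<rho>_lim(2)]) auto
  have bound: "q (n + N) x \<le> H x" if "x \<in> space M" for n x
    using N that by simp
  have "(\<lambda>n. \<integral>x. q (n + N) x * f x \<partial>M) \<longlonglongrightarrow> (\<integral>x. \<rho> x * f x \<partial>M)"
  proof (rule integral_dominated_convergence[where w = "\<lambda>x. H x * B"])
    show "AE x in M. norm (q (n + N) x * f x) \<le> H x * B" for n
    proof (rule AE_I2)
      fix x assume x: "x \<in> space M"
      show "norm (q (n + N) x * f x) \<le> H x * B"
        using bound[OF x, of n] q(2)[OF x, of "n + N"] f(2)[OF x] by (auto simp: abs_mult intro!: mult_mono)
    qed
    show "AE x in M. (\<lambda>n. q (n + N) x * f x) \<longlonglongrightarrow> \<rho> x * f x"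
      using \<rho>_lim(2) by (intro AE_I2 tendsto_mult_right LIMSEQ_ignore_initial_segment)
  qed (use q \<rho>_lim f H in simp_all)
  moreover have "(\<lambda>n. \<integral>x. q (n + N) x \<partial>M) \<longlonglongrightarrow> (\<integral>x. \<rho> x \<partial>M)"
  proof (rule integral_dominated_convergence[where w = H])
    show "AE x in M. norm (q (n + N) x) \<le> H x" for n
      using bound q(2) by (intro AE_I2) simp
    show "AE x in M. (\<lambda>n. q (n + N) x) \<longlonglongrightarrow> \<rho> x"
      using \<rho>_lim(2) by (intro AE_I2 LIMSEQ_ignore_initial_segment)
  qed (use q \<rho>_lim H in simp_all)
  ultimately have "(\<lambda>n. (\<integral>x. q (n + N) x * f x \<partial>M) / (\<integral>x. q (n + N) x \<partial>M))
      \<longlonglongrightarrow> (\<integral>x. \<rho> x * f x \<partial>M) / (\<integral>x. \<rho> x \<partial>M)"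
    using \<rho>_int by (rule tendsto_divide)
  then show ?thesis
    using q \<rho>_lim \<rho>_nonneg f by (simp add: integral_normalized_density LIMSEQ_offset)
qed

lemma conv_in_distribution_normalized_density:
  fixes q :: "nat \<Rightarrow> (nat \<Rightarrow> real) \<Rightarrow> real" and \<rho> H :: "(nat \<Rightarrow> real) \<Rightarrow> real"
  assumes "\<And>n. q n \<in> borel_measurable (Rm m)" "\<And>n x. x \<in> space (Rm m) \<Longrightarrow> 0 \<le> q n x"
    and "\<rho> \<in> borel_measurable (Rm m)" "\<And>x. x \<in> space (Rm m) \<Longrightarrow> (\<lambda>n. q n x) \<longlonglongrightarrow> \<rho> x"
    and "integrable (Rm m) H" "\<forall>\<^sub>F n in sequentially. \<forall>x\<in>space (Rm m). q n x \<le> H x"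
    and "(\<integral>x. \<rho> x \<partial>Rm m) \<noteq> 0"
  shows "conv_in_distribution sequentially m
           (\<lambda>n. density (Rm m) (\<lambda>x. ennreal (q n x / (\<integral>y. q n y \<partial>Rm m))))
           (density (Rm m) (\<lambda>x. ennreal (\<rho> x / (\<integral>y. \<rho> y \<partial>Rm m))))"
  unfolding conv_in_distribution_def bounded_iff
  using borel_measurable_continuous_on_Rm by (auto intro!: tendsto_integral_normalized_density[OF assms])

lemma conv_in_distribution_transform:
  assumes conv: "conv_in_distribution F m \<mu> \<nu>" and "F' \<le> F" and eq: "\<forall>\<^sub>F n in F'. \<mu>' n = \<mu> n"
  shows "conv_in_distribution F' m \<mu>' \<nu>"
  unfolding conv_in_distribution_def
proof (intro allI impI)
  fix f :: "(nat \<Rightarrow> real) \<Rightarrow> real"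
  assume "continuous_on (space (Rm m)) f \<and> bounded (f ` space (Rm m))"
  then have "((\<lambda>n. \<integral>x. f x \<partial>\<mu> n) \<longlongrightarrow> (\<integral>x. f x \<partial>\<nu>)) F'"
    using conv tendsto_mono[OF \<open>F' \<le> F\<close>] unfolding conv_in_distribution_def by blast
  then show "((\<lambda>n. \<integral>x. f x \<partial>\<mu>' n) \<longlongrightarrow> (\<integral>x. f x \<partial>\<nu>)) F'"
    by (rule Lim_transform_eventually) (use eq in \<open>auto elim: eventually_mono\<close>)
qed

section \<open>The critical multi-species Curie--Weiss model\<close>

locale critical_curie_weiss =
  fixes m :: nat and p :: "nat \<Rightarrow> real" and k :: "nat \<Rightarrow> nat \<Rightarrow> real"
    and a :: "nat \<Rightarrow> real" and V :: "nat \<Rightarrow> nat \<Rightarrow> real" and lam :: "nat \<Rightarrow> real"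
    and G :: "nat \<Rightarrow> nat \<Rightarrow> nat"
  assumes m_pos: "m \<ge> 1"
    and p_pos: "\<forall>i<m. p i > 0" and p_sum: "(\<Sum>i<m. p i) = 1"
    and k_sym: "\<forall>i<m. \<forall>j<m. k i j = k j i"
    and V_orth: "\<forall>i<m. \<forall>j<m. (\<Sum>l<m. V i l * V j l) = (if i = j then 1 else 0)"
    and V_decomp: "\<forall>i<m. \<forall>j<m. beta_cr m p k a * (sqrt (p i) * k i j * sqrt (p j))
                     = (\<Sum>l<m. V i l * (if l = m - 1 then 1 else lam l) * V j l)"
    and lam_bounds: "\<forall>l<m-1. 0 < lam l \<and> lam l < 1"
    and G_range: "\<forall>n\<in>admissible_sizes m p. \<forall>v<n. G n v < m"
    and G_card: "\<forall>n\<in>admissible_sizes m p. \<forall>i<m.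
                   real (card {v. v < n \<and> G n v = i}) = real n * p i"
begin

abbreviation \<beta> :: real where "\<beta> \<equiv> beta_cr m p k a"

text \<open>Gamma_diag n and field_coef n are the diagonals of \<Gamma>_n and C_n \<Gamma>_n; rotated_mag n \<sigma> is
V^T D^{-1} M(\<sigma>), so that U_n = \<Gamma>_n rotated_mag; field n x i is the i-th entry of D^{-1} V C_n \<Gamma>_n x,
the field t_{n,i}(x) acting on block i; hs_density n is q_n.\<close>

definition eigval :: "nat \<Rightarrow> real" where
  "eigval l = (if l = m - 1 then 1 else lam l)"

definition Gamma_diag :: "nat \<Rightarrow> nat \<Rightarrow> real" where
  "Gamma_diag n j = (if j = m - 1 then real n powr (-3/4) else real n powr (-1/2))"

definition field_coef :: "nat \<Rightarrow> nat \<Rightarrow> real" where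
  "field_coef n j = (if j = m - 1 then real n powr (-1/4) else lam j * real n powr (-1/2))"

definition rotated_mag :: "nat \<Rightarrow> (nat \<Rightarrow> real) \<Rightarrow> nat \<Rightarrow> real" where
  "rotated_mag n \<sigma> l = (\<Sum>i<m. V i l * block_mag n (G n) \<sigma> i / sqrt (p i))"

definition field :: "nat \<Rightarrow> (nat \<Rightarrow> real) \<Rightarrow> nat \<Rightarrow> real" where
  "field n x i = (\<Sum>j<m. field_coef n j * x j * V i j) / sqrt (p i)"

definition hs_density :: "nat \<Rightarrow> (nat \<Rightarrow> real) \<Rightarrow> real" where
  "hs_density n x = exp (- (1/2) * (\<Sum>j<m-1. (lam j - (lam j)\<^sup>2) * (x j)\<^sup>2)
                         - real n * (\<Sum>i<m. p i * lncosh_gap (field n x i)))"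

lemma lessThan_m_split: "{..<m} = insert (m - 1) {..<m - 1}"
  using m_pos by auto

lemma admissible_sizes_pos: "n \<in> admissible_sizes m p \<Longrightarrow> n > 0"
  by (simp add: admissible_sizes_def)

lemma Cn_diag_pos: "n > 0 \<Longrightarrow> j < m \<Longrightarrow> 0 < Cn_diag m lam n j"
  using lam_bounds by (auto simp: Cn_diag_def)

lemma Cn_diag_mult_Gamma_diag: "n > 0 \<Longrightarrow> Cn_diag m lam n j * Gamma_diag n j = field_coef n j"
  by (auto simp: Cn_diag_def Gamma_diag_def field_coef_def powr_half_sqrt[symmetric] powr_add[symmetric])

lemma Cn_diag_mult_Gamma_diag_sq:
  assumes "n > 0" shows "Cn_diag m lam n j * (Gamma_diag n j)\<^sup>2 = eigval j / real n"
proof -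
  have inv: "real n powr (-1) = 1 / real n"
    using assms by (simp add: powr_minus_divide)
  show ?thesis
  proof (cases "j = m - 1")
    case True
    have "(real n powr (-3/4))\<^sup>2 = real n powr (-3/2)"
      using assms by (subst powr_power) auto
    moreover have "sqrt (real n) = real n powr (1/2)"
      using assms by (simp add: powr_half_sqrt)
    moreover have "real n powr (1/2) * real n powr (-3/2) = real n powr (-1)"
      by (simp add: powr_add[symmetric])
    ultimately show ?thesis
      using True inv by (simp add: Cn_diag_def Gamma_diag_def eigval_def)
  next
    case False
    have "(real n powr (-1/2))\<^sup>2 = real n powr (-1)"
      using assms by (subst powr_power) auto
    then show ?thesis
      using False inv by (simp add: Cn_diag_def Gamma_diag_def eigval_def)
  qed
qed

lemma n_mult_field_coef_sq:
  assumes "n > 0" shows "real n * (field_coef n j)\<^sup>2 = Cn_diag m lam n j * eigval j"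
proof -
  have "real n * (field_coef n j)\<^sup>2 = Cn_diag m lam n j * (real n * (Cn_diag m lam n j * (Gamma_diag n j)\<^sup>2))"
    by (simp add: Cn_diag_mult_Gamma_diag[OF assms, symmetric] power2_eq_square algebra_simps)
  then show ?thesis
    using assms by (simp add: Cn_diag_mult_Gamma_diag_sq)
qed

lemma U_vec_eq: "j < m \<Longrightarrow> U_vec m n p V (G n) \<sigma> j = Gamma_diag n j * rotated_mag n \<sigma> j"
  by (simp add: U_vec_def rotated_mag_def Gamma_diag_def)

lemma sum_p_field_sq: "(\<Sum>i<m. p i * (field n x i)\<^sup>2) = (\<Sum>j<m. (field_coef n j * x j)\<^sup>2)"
proof -
  have "(\<Sum>i<m. p i * (field n x i)\<^sup>2) = (\<Sum>i<m. (\<Sum>j<m. (field_coef n j * x j) * V i j)\<^sup>2)"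
  proof (rule sum.cong[OF refl])
    fix i assume "i \<in> {..<m}"
    then have "p i > 0" using p_pos by simp
    then show "p i * (field n x i)\<^sup>2 = (\<Sum>j<m. (field_coef n j * x j) * V i j)\<^sup>2"
      by (simp add: field_def power_divide)
  qed
  also have "\<dots> = (\<Sum>j<m. (field_coef n j * x j)\<^sup>2)"
    using orthonormal_rows_imp_orthonormal_cols[OF V_orth] by (rule sum_square_orthogonal_transform)
  finally show ?thesis .
qed

lemma beta_interaction_eq:
  assumes n: "n \<in> admissible_sizes m p" and \<sigma>: "\<sigma> \<in> config_set n"
  shows "\<beta> * interaction n (G n) k \<sigma>
    = (\<Sum>l<m. eigval l * (rotated_mag n \<sigma> l)\<^sup>2) / (2 * real n) - \<beta> / (2 * real n) * (\<Sum>v<n. k (G n v) (G n v))"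
proof -
  have "\<beta> * (\<Sum>i<m. \<Sum>j<m. k i j * block_mag n (G n) \<sigma> i * block_mag n (G n) \<sigma> j)
      = (\<Sum>l<m. eigval l * (rotated_mag n \<sigma> l)\<^sup>2)"
    unfolding rotated_mag_def eigval_def using p_pos V_decomp by (rule quadratic_form_diagonalize)
  moreover have "interaction n (G n) k \<sigma>
      = ((\<Sum>i<m. \<Sum>j<m. k i j * block_mag n (G n) \<sigma> i * block_mag n (G n) \<sigma> j)
         - (\<Sum>v<n. k (G n v) (G n v))) / (2 * real n)"
    using G_range n k_sym \<sigma> by (intro interaction_block_form) auto
  ultimately show ?thesis
    by (simp add: diff_divide_distrib right_diff_distrib)
qed

lemma sum_field_coef_rotated_mag:
  assumes n: "n \<in> admissible_sizes m p"
  shows "(\<Sum>j<m. field_coef n j * x j * rotated_mag n \<sigma> j) = (\<Sum>v<n. field n x (G n v) * \<sigma> v)"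
proof -
  have "(\<Sum>j<m. field_coef n j * x j * rotated_mag n \<sigma> j)
      = (\<Sum>i<m. \<Sum>j<m. field_coef n j * x j * V i j / sqrt (p i) * block_mag n (G n) \<sigma> i)"
    unfolding rotated_mag_def sum_distrib_left by (subst sum.swap) (simp add: ac_simps)
  also have "\<dots> = (\<Sum>i<m. field n x i * block_mag n (G n) \<sigma> i)"
    by (simp add: field_def sum_distrib_right sum_divide_distrib)
  also have "\<dots> = (\<Sum>v<n. field n x (G n v) * \<sigma> v)"
    using G_range n by (intro sum_by_blocks[symmetric]) auto
  finally show ?thesis .
qed

lemma exponent_complete_square:
  assumes n: "n \<in> admissible_sizes m p" and \<sigma>: "\<sigma> \<in> config_set n"
  shows "\<beta> * interaction n (G n) k \<sigma> - (1/2) * (\<Sum>j<m. Cn_diag m lam n j * (x j - U_vec m n p V (G n) \<sigma> j)\<^sup>2)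
       = - \<beta> / (2 * real n) * (\<Sum>v<n. k (G n v) (G n v)) - (1/2) * (\<Sum>j<m. Cn_diag m lam n j * (x j)\<^sup>2)
         + (\<Sum>v<n. field n x (G n v) * \<sigma> v)"
proof -
  have n_pos: "n > 0" using admissible_sizes_pos[OF n] .
  have "Cn_diag m lam n j * (x j - U_vec m n p V (G n) \<sigma> j)\<^sup>2
      = Cn_diag m lam n j * (x j)\<^sup>2 - 2 * (field_coef n j * x j * rotated_mag n \<sigma> j)
        + eigval j / real n * (rotated_mag n \<sigma> j)\<^sup>2" if "j < m" for j
  proof -
    have "Cn_diag m lam n j * (x j - U_vec m n p V (G n) \<sigma> j)\<^sup>2
        = Cn_diag m lam n j * (x j)\<^sup>2 - 2 * ((Cn_diag m lam n j * Gamma_diag n j) * x j * rotated_mag n \<sigma> j)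
          + (Cn_diag m lam n j * (Gamma_diag n j)\<^sup>2) * (rotated_mag n \<sigma> j)\<^sup>2"
      using that by (simp add: U_vec_eq power2_eq_square algebra_simps)
    then show ?thesis
      using n_pos by (simp add: Cn_diag_mult_Gamma_diag Cn_diag_mult_Gamma_diag_sq)
  qed
  then have "(\<Sum>j<m. Cn_diag m lam n j * (x j - U_vec m n p V (G n) \<sigma> j)\<^sup>2)
      = (\<Sum>j<m. Cn_diag m lam n j * (x j)\<^sup>2) - 2 * (\<Sum>j<m. field_coef n j * x j * rotated_mag n \<sigma> j)
        + (\<Sum>l<m. eigval l * (rotated_mag n \<sigma> l)\<^sup>2) / real n"
    by (simp add: sum.distrib sum_subtractf sum_distrib_left sum_divide_distrib)
  then show ?thesis
    using beta_interaction_eq[OF n \<sigma>] sum_field_coef_rotated_mag[OF n, of x \<sigma>] by (simp add: field_simps)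
qed

lemma hs_exponent_eq:
  assumes "n > 0"
  shows "- (1/2) * (\<Sum>j<m. Cn_diag m lam n j * (x j)\<^sup>2) + (\<Sum>i<m. real n * p i * ln (cosh (field n x i)))
       = - (1/2) * (\<Sum>j<m-1. (lam j - (lam j)\<^sup>2) * (x j)\<^sup>2)
         - real n * (\<Sum>i<m. p i * lncosh_gap (field n x i))"
proof -
  have "(\<Sum>i<m. real n * p i * ln (cosh (field n x i)))
      = real n / 2 * (\<Sum>i<m. p i * (field n x i)\<^sup>2) - real n * (\<Sum>i<m. p i * lncosh_gap (field n x i))"
    by (simp add: lncosh_gap_def sum_distrib_left sum_subtractf algebra_simps sum_divide_distrib)
  also have "real n / 2 * (\<Sum>i<m. p i * (field n x i)\<^sup>2) = (1/2) * (\<Sum>j<m. Cn_diag m lam n j * eigval j * (x j)\<^sup>2)"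
  proof -
    have "real n * (field_coef n j * x j)\<^sup>2 = Cn_diag m lam n j * eigval j * (x j)\<^sup>2" for j
      using n_mult_field_coef_sq[OF assms, of j] by (simp add: power_mult_distrib mult.assoc[symmetric])
    then show ?thesis
      by (simp add: sum_p_field_sq sum_distrib_left)
  qed
  finally have "- (1/2) * (\<Sum>j<m. Cn_diag m lam n j * (x j)\<^sup>2) + (\<Sum>i<m. real n * p i * ln (cosh (field n x i)))
      = - (1/2) * (\<Sum>j<m. Cn_diag m lam n j * (1 - eigval j) * (x j)\<^sup>2)
        - real n * (\<Sum>i<m. p i * lncosh_gap (field n x i))"
    by (simp add: algebra_simps sum_subtractf)
  also have "(\<Sum>j<m. Cn_diag m lam n j * (1 - eigval j) * (x j)\<^sup>2) = (\<Sum>j<m-1. (lam j - (lam j)\<^sup>2) * (x j)\<^sup>2)"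
    unfolding lessThan_m_split by (auto simp: eigval_def Cn_diag_def power2_eq_square algebra_simps intro!: sum.cong)
  finally show ?thesis .
qed

lemma exp_interaction_mult_normal_densities:
  assumes n: "n \<in> admissible_sizes m p" and \<sigma>: "\<sigma> \<in> config_set n"
  shows "exp (\<beta> * interaction n (G n) k \<sigma>)
           * (\<Prod>j<m. normal_density (U_vec m n p V (G n) \<sigma> j) (1 / sqrt (Cn_diag m lam n j)) (x j))
       = (\<Prod>j<m. sqrt (Cn_diag m lam n j / (2 * pi)))
           * exp (- \<beta> / (2 * real n) * (\<Sum>v<n. k (G n v) (G n v)) - (1/2) * (\<Sum>j<m. Cn_diag m lam n j * (x j)\<^sup>2))
           * exp (\<Sum>v<n. \<sigma> v * field n x (G n v))"
proof -
  define S where "S = (\<Sum>j<m. Cn_diag m lam n j * (x j - U_vec m n p V (G n) \<sigma> j)\<^sup>2)"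
  have "exp (\<beta> * interaction n (G n) k \<sigma>) * exp (- (1/2) * S) = exp (\<beta> * interaction n (G n) k \<sigma> - (1/2) * S)"
    by (simp add: exp_add[symmetric])
  also have "\<beta> * interaction n (G n) k \<sigma> - (1/2) * S
      = (- \<beta> / (2 * real n) * (\<Sum>v<n. k (G n v) (G n v)) - (1/2) * (\<Sum>j<m. Cn_diag m lam n j * (x j)\<^sup>2))
        + (\<Sum>v<n. \<sigma> v * field n x (G n v))"
    using exponent_complete_square[OF n \<sigma>, of x] by (simp add: S_def mult.commute)
  finally show ?thesis
    using Cn_diag_pos[OF admissible_sizes_pos[OF n]]
    by (simp add: prod_normal_density_precision S_def exp_add)
qed

lemma sum_config_set_exp_field:
  assumes n: "n \<in> admissible_sizes m p"
  shows "(\<Sum>\<sigma>\<in>config_set n. exp (\<Sum>v<n. \<sigma> v * field n x (G n v)))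
       = 2 ^ n * exp (\<Sum>i<m. real n * p i * ln (cosh (field n x i)))"
proof -
  have "(\<Prod>v<n. 2 * cosh (field n x (G n v))) = 2 ^ n * exp (\<Sum>v<n. ln (cosh (field n x (G n v))))"
    by (simp add: prod.distrib exp_sum cosh_real_pos)
  also have "(\<Sum>v<n. ln (cosh (field n x (G n v)))) = (\<Sum>i<m. real n * p i * ln (cosh (field n x i)))"
    using G_range G_card n by (subst sum_const_on_blocks[of n "G n" m]) auto
  finally show ?thesis
    by (simp add: sum_config_set_exp)
qed

lemma gibbs_gaussian_mixture_eq:
  assumes n: "n \<in> admissible_sizes m p"
  obtains \<kappa> where "\<kappa> > 0"
    and "\<And>x. (\<Sum>\<sigma>\<in>config_set n. exp (\<beta> * interaction n (G n) k \<sigma>)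
                   / (\<Sum>\<tau>\<in>config_set n. exp (\<beta> * interaction n (G n) k \<tau>))
                 * (\<Prod>j<m. normal_density (U_vec m n p V (G n) \<sigma> j) (1 / sqrt (Cn_diag m lam n j)) (x j)))
             = \<kappa> * hs_density n x"
proof
  have n_pos: "n > 0" using admissible_sizes_pos[OF n] .
  define Z where "Z = (\<Sum>\<tau>\<in>config_set n. exp (\<beta> * interaction n (G n) k \<tau>))"
  define K where "K = (\<Prod>j<m. sqrt (Cn_diag m lam n j / (2 * pi)))"
  define \<kappa> where "\<kappa> = K / Z * exp (- \<beta> / (2 * real n) * (\<Sum>v<n. k (G n v) (G n v))) * 2 ^ n"
  have all_up: "(\<lambda>v\<in>{..<n}. 1) \<in> config_set n"
    by (simp add: config_set_def)
  have "Z > 0"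
    unfolding Z_def by (rule sum_pos2[OF _ all_up]) (auto simp: config_set_def finite_PiE)
  moreover have "K > 0"
    unfolding K_def using Cn_diag_pos[OF n_pos] by (intro prod_pos) auto
  ultimately show "\<kappa> > 0"
    by (simp add: \<kappa>_def)
  fix x
  define E where "E = - \<beta> / (2 * real n) * (\<Sum>v<n. k (G n v) (G n v)) - (1/2) * (\<Sum>j<m. Cn_diag m lam n j * (x j)\<^sup>2)"
  have "(\<Sum>\<sigma>\<in>config_set n. exp (\<beta> * interaction n (G n) k \<sigma>) / Z
          * (\<Prod>j<m. normal_density (U_vec m n p V (G n) \<sigma> j) (1 / sqrt (Cn_diag m lam n j)) (x j)))
      = (\<Sum>\<sigma>\<in>config_set n. (K / Z * exp E) * exp (\<Sum>v<n. \<sigma> v * field n x (G n v)))"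
    using exp_interaction_mult_normal_densities[OF n]
    by (intro sum.cong refl) (simp add: K_def E_def)
  also have "\<dots> = K / Z * exp E * (2 ^ n * exp (\<Sum>i<m. real n * p i * ln (cosh (field n x i))))"
    by (simp only: sum_distrib_left[symmetric] sum_config_set_exp_field[OF n])
  also have "\<dots> = \<kappa> * hs_density n x"
  proof -
    have "hs_density n x = exp ((\<Sum>i<m. real n * p i * ln (cosh (field n x i)))
        - (1/2) * (\<Sum>j<m. Cn_diag m lam n j * (x j)\<^sup>2))"
      unfolding hs_density_def hs_exponent_eq[OF n_pos, symmetric] by (simp add: algebra_simps)
    then show ?thesis
      by (simp add: \<kappa>_def E_def exp_diff)
  qed
  finally show "(\<Sum>\<sigma>\<in>config_set n. exp (\<beta> * interaction n (G n) k \<sigma>) / Z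
          * (\<Prod>j<m. normal_density (U_vec m n p V (G n) \<sigma> j) (1 / sqrt (Cn_diag m lam n j)) (x j)))
      = \<kappa> * hs_density n x" .
qed

lemma continuous_on_hs_density: "continuous_on S (hs_density n)"
  unfolding hs_density_def [abs_def] field_def
  by (intro continuous_intros) (use p_pos in auto)

lemma law_eq_normalized_hs_density:
  fixes \<Omega> :: "'a measure" and \<sigma> Y :: "'a \<Rightarrow> nat \<Rightarrow> real"
  assumes n: "n \<in> admissible_sizes m p" and "prob_space \<Omega>"
    and \<sigma>_law: "distr \<Omega> (count_space (config_set n)) \<sigma> = gibbs_measure n (G n) k \<beta>"
    and Y_law: "distr \<Omega> (Rm m) Y = gaussian_diag m (Cn_diag m lam n)"
    and indep: "prob_space.indep_var \<Omega> (count_space (config_set n)) \<sigma> (Rm m) Y"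
  shows "distr \<Omega> (Rm m) (\<lambda>\<omega>. \<lambda>j\<in>{..<m}. U_vec m n p V (G n) (\<sigma> \<omega>) j + Y \<omega> j)
       = density (Rm m) (\<lambda>x. ennreal (hs_density n x / (\<integral>y. hs_density n y \<partial>Rm m)))"
proof -
  interpret \<Omega>: prob_space \<Omega> by fact
  have n_pos: "n > 0" using admissible_sizes_pos[OF n] .
  obtain \<kappa> where \<kappa>: "\<kappa> > 0"
    and mixture: "\<And>x. (\<Sum>\<sigma>\<in>config_set n. exp (\<beta> * interaction n (G n) k \<sigma>)
                   / (\<Sum>\<tau>\<in>config_set n. exp (\<beta> * interaction n (G n) k \<tau>))
                 * (\<Prod>j<m. normal_density (U_vec m n p V (G n) \<sigma> j) (1 / sqrt (Cn_diag m lam n j)) (x j)))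
             = \<kappa> * hs_density n x"
    using gibbs_gaussian_mixture_eq[OF n] by blast
  have law: "distr \<Omega> (Rm m) (\<lambda>\<omega>. \<lambda>j\<in>{..<m}. U_vec m n p V (G n) (\<sigma> \<omega>) j + Y \<omega> j)
      = density (Rm m) (\<lambda>x. ennreal (\<kappa> * hs_density n x))"
    unfolding mixture[symmetric] using \<sigma>_law Cn_diag_pos[OF n_pos]
    by (intro distr_add_indep_gaussian[OF \<open>prob_space \<Omega>\<close> _ _ _ Y_law _ indep])
       (auto simp: config_set_def finite_PiE gibbs_measure_def intro!: divide_nonneg_nonneg sum_nonneg)
  have "(\<lambda>\<omega>. \<lambda>j\<in>{..<m}. U_vec m n p V (G n) (\<sigma> \<omega>) j + Y \<omega> j) \<in> \<Omega> \<rightarrow>\<^sub>M Rm m"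
    using indep by (intro measurable_add_component[where u = "U_vec m n p V (G n)" and \<sigma> = \<sigma>])
      (auto simp: \<Omega>.indep_var_distribution_eq)
  then have "prob_space (density (Rm m) (\<lambda>x. ennreal (\<kappa> * hs_density n x)))"
    unfolding law[symmetric] by (rule \<Omega>.prob_space_distr)
  then show ?thesis
    unfolding law using \<kappa> continuous_on_hs_density
    by (intro density_scaled_eq_normalized borel_measurable_continuous_on_Rm) (auto simp: hs_density_def)
qed

lemma field_coef_tendsto: "(\<lambda>n. field_coef n j) \<longlonglongrightarrow> 0"
proof -
  have "(\<lambda>n. real n powr e) \<longlonglongrightarrow> 0" if "e < 0" for e
    using that by (intro tendsto_neg_powr filterlim_real_sequentially)
  from this[of "-1/4"] this[of "-1/2"] show ?thesis
    unfolding field_coef_def by (cases "j = m - 1") (auto intro: tendsto_mult_right_zero)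
qed

lemma field_coef_scaled_tendsto: "(\<lambda>n. real n powr (1/4) * field_coef n j) \<longlonglongrightarrow> (if j = m - 1 then 1 else 0)"
proof (cases "j = m - 1")
  case True
  have "\<forall>\<^sub>F n in sequentially. 1 = real n powr (1/4) * field_coef n j"
    by (intro eventually_sequentiallyI[of 1]) (simp add: True field_coef_def powr_add[symmetric])
  then have "(\<lambda>n. real n powr (1/4) * field_coef n j) \<longlonglongrightarrow> 1"
    by (rule Lim_transform_eventually[OF tendsto_const])
  then show ?thesis
    using True by simp
next
  case False
  have "(\<lambda>n. lam j * real n powr (-1/4)) \<longlonglongrightarrow> lam j * 0"
    by (intro tendsto_mult tendsto_const tendsto_neg_powr filterlim_real_sequentially) simp
  moreover have "\<forall>\<^sub>F n in sequentially. lam j * real n powr (-1/4) = real n powr (1/4) * field_coef n j"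
    using False by (intro eventually_sequentiallyI[of 1]) (auto simp: field_coef_def powr_add[symmetric])
  ultimately show ?thesis
    using False by (simp add: Lim_transform_eventually)
qed

lemma field_tendsto: "i < m \<Longrightarrow> (\<lambda>n. field n x i) \<longlonglongrightarrow> 0"
  using p_pos tendsto_intros(1)
  unfolding field_def by (auto intro!: tendsto_eq_intros field_coef_tendsto)

lemma field_scaled_tendsto:
  assumes "i < m"
  shows "(\<lambda>n. real n powr (1/4) * field n x i) \<longlonglongrightarrow> x (m - 1) * V i (m - 1) / sqrt (p i)"
proof -
  have "(\<lambda>n. (\<Sum>j<m. (real n powr (1/4) * field_coef n j) * x j * V i j) / sqrt (p i))
      \<longlonglongrightarrow> (\<Sum>j<m. (if j = m - 1 then 1 else 0) * x j * V i j) / sqrt (p i)"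
    using assms p_pos by (intro tendsto_intros field_coef_scaled_tendsto) auto
  moreover have "(\<Sum>j<m. (if j = m - 1 then 1 else 0) * x j * V i j) = x (m - 1) * V i (m - 1)"
    using m_pos by (simp add: if_distrib[of "\<lambda>c. c * _"] sum.delta cong: if_cong)
  ultimately show ?thesis
    by (simp add: field_def sum_distrib_left ac_simps)
qed

lemma hs_density_tendsto: "(\<lambda>n. hs_density n x) \<longlonglongrightarrow> limit_density m p lam V x"
proof -
  have "(\<lambda>n. real n * lncosh_gap (field n x i)) \<longlonglongrightarrow> (x (m - 1) * V i (m - 1) / sqrt (p i))^4 / 12"
    if "i \<in> {..<m}" for i
    using that by (intro tendsto_scaled_lncosh_gap field_tendsto field_scaled_tendsto) auto
  moreover have "hs_density n x = exp (- (1/2) * (\<Sum>j<m-1. (lam j - (lam j)\<^sup>2) * (x j)\<^sup>2)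
      - (\<Sum>i<m. p i * (real n * lncosh_gap (field n x i))))" for n
    by (simp add: hs_density_def sum_distrib_left ac_simps)
  ultimately have "(\<lambda>n. hs_density n x) \<longlonglongrightarrow> exp (- (1/2) * (\<Sum>j<m-1. (lam j - (lam j)\<^sup>2) * (x j)\<^sup>2)
      - (\<Sum>i<m. p i * ((x (m - 1) * V i (m - 1) / sqrt (p i))^4 / 12)))"
    by (simp only:) (intro tendsto_exp tendsto_diff tendsto_const tendsto_sum tendsto_mult_left, auto)
  moreover have "(\<Sum>i<m. p i * ((x (m - 1) * V i (m - 1) / sqrt (p i))^4 / 12))
      = (x (m - 1))^4 / 12 * (\<Sum>i<m. (V i (m - 1))^4 / p i)"
    unfolding sum_distrib_left
  proof (rule sum.cong[OF refl])
    fix i assume "i \<in> {..<m}"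
    then have p_i: "p i > 0" using p_pos by simp
    have "(sqrt (p i))^4 = ((sqrt (p i))\<^sup>2)\<^sup>2"
      by (simp flip: power_mult)
    then have "(sqrt (p i))^4 = (p i)\<^sup>2"
      using p_i by simp
    then show "p i * ((x (m - 1) * V i (m - 1) / sqrt (p i))^4 / 12) = (x (m - 1))^4 / 12 * ((V i (m - 1))^4 / p i)"
      using p_i by (simp add: power_divide power_mult_distrib field_simps power2_eq_square)
  qed
  ultimately show ?thesis
    unfolding limit_density_def by (simp only:)
qed

definition pmin :: real where
  "pmin = Min (p ` {..<m})"

lemma pmin_pos: "0 < pmin"
  using m_pos p_pos unfolding pmin_def by (subst Min_gr_iff) (auto simp: lessThan_m_split)

lemma pmin_le: "i < m \<Longrightarrow> pmin \<le> p i"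
  unfolding pmin_def by (intro Min_le) auto

lemma n_sum_lncosh_gap_ge:
  assumes n: "n \<ge> 1"
  shows "pmin * ((x (m - 1))\<^sup>2 - 1) / 108 \<le> real n * (\<Sum>i<m. p i * lncosh_gap (field n x i))"
proof -
  define s where "s = \<bar>x (m - 1)\<bar> * real n powr (-1/4)"
  have "s\<^sup>2 = (field_coef n (m - 1) * x (m - 1))\<^sup>2"
    using n by (simp add: s_def field_coef_def power_mult_distrib)
  also have "\<dots> \<le> (\<Sum>j<m. (field_coef n j * x j)\<^sup>2)"
    using m_pos by (intro member_le_sum) auto
  also have "\<dots> = (\<Sum>i<m. p i * (field n x i)\<^sup>2)"
    by (rule sum_p_field_sq[symmetric])
  finally have weighted: "s\<^sup>2 \<le> (\<Sum>i<m. p i * (field n x i)\<^sup>2)" .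
  have "\<exists>i0<m. s\<^sup>2 \<le> (field n x i0)\<^sup>2"
  proof (rule ccontr)
    assume "\<not> ?thesis"
    then have "(field n x i)\<^sup>2 < s\<^sup>2" if "i < m" for i
      using that by (auto simp: not_le)
    then have "(\<Sum>i<m. p i * (field n x i)\<^sup>2) < (\<Sum>i<m. p i * s\<^sup>2)"
      using m_pos p_pos by (intro sum_strict_mono) (auto simp: lessThan_empty_iff)
    also have "\<dots> = s\<^sup>2"
      by (simp add: sum_distrib_right[symmetric] p_sum)
    finally show False
      using weighted by simp
  qed
  then obtain i0 where i0: "i0 < m" "s\<^sup>2 \<le> (field n x i0)\<^sup>2"
    by blast
  have "s \<le> \<bar>field n x i0\<bar>"
    using i0(2) by (simp add: s_def abs_le_square_iff[symmetric])
  then have gap: "lncosh_gap s \<le> lncosh_gap (field n x i0)"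
    using lncosh_gap_mono[of s "\<bar>field n x i0\<bar>"] by (simp add: s_def)
  have "pmin * ((x (m - 1))\<^sup>2 - 1) / 108 \<le> pmin * (real n * lncosh_gap s)"
    using lncosh_gap_scaled_ge[OF n, of "x (m - 1)"] pmin_pos by (simp add: s_def mult_left_mono)
  also have "\<dots> \<le> real n * (p i0 * lncosh_gap (field n x i0))"
    using pmin_le[OF i0(1)] gap lncosh_gap_nonneg[of s] pmin_pos
    by (simp add: mult.left_commute mult_mono)
  also have "\<dots> \<le> real n * (\<Sum>i<m. p i * lncosh_gap (field n x i))"
    using i0(1) p_pos lncosh_gap_nonneg by (intro mult_left_mono member_le_sum) auto
  finally show ?thesis .
qed

definition decay :: "nat \<Rightarrow> real" where
  "decay j = (if j = m - 1 then pmin / 108 else (lam j - (lam j)\<^sup>2) / 2)"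

definition dominating :: "(nat \<Rightarrow> real) \<Rightarrow> real" where
  "dominating x = exp (pmin / 108 - (\<Sum>j<m. decay j * (x j)\<^sup>2))"

lemma decay_pos: "j < m \<Longrightarrow> 0 < decay j"
  using pmin_pos lam_bounds by (auto simp: decay_def power2_eq_square algebra_simps)

lemma hs_density_le_dominating:
  assumes "n \<ge> 1" shows "hs_density n x \<le> dominating x"
proof -
  have "(\<Sum>j<m. decay j * (x j)\<^sup>2)
      = (1/2) * (\<Sum>j<m-1. (lam j - (lam j)\<^sup>2) * (x j)\<^sup>2) + pmin / 108 * (x (m - 1))\<^sup>2"
    unfolding lessThan_m_split by (simp add: decay_def sum_distrib_left sum_divide_distrib)
  then show ?thesis
    using n_sum_lncosh_gap_ge[OF assms, of x]
    by (simp add: hs_density_def dominating_def right_diff_distrib diff_divide_distrib)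
qed

lemma integrable_dominating: "integrable (Rm m) dominating"
proof -
  interpret L: product_sigma_finite "\<lambda>_. lborel :: real measure"
    by (intro product_sigma_finite.intro sigma_finite_lborel)
  have "dominating x = exp (pmin / 108) * exp (\<Sum>j<m. - decay j * (x j)\<^sup>2)" for x
    by (simp add: dominating_def sum_negf flip: exp_add)
  then have "dominating = (\<lambda>x. exp (pmin / 108) * (\<Prod>j<m. exp (- decay j * (x j)\<^sup>2)))"
    by (simp add: exp_sum fun_eq_iff)
  then show ?thesis
    unfolding Rm_def using decay_pos
    by (simp only:) (intro integrable_mult_right L.product_integrable_prod integrable_exp_neg_square, auto)
qed

lemma continuous_on_limit_density: "continuous_on S (limit_density m p lam V)"
  unfolding limit_density_def [abs_def] by (intro continuous_intros) (use p_pos in auto)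

lemma integrable_limit_density: "integrable (Rm m) (limit_density m p lam V)"
proof (rule Bochner_Integration.integrable_bound[OF integrable_dominating])
  show "limit_density m p lam V \<in> borel_measurable (Rm m)"
    by (intro borel_measurable_continuous_on_Rm continuous_on_limit_density)
  have "limit_density m p lam V x \<le> dominating x" for x
    using hs_density_le_dominating by (intro LIMSEQ_le_const2[OF hs_density_tendsto]) auto
  then show "AE x in Rm m. norm (limit_density m p lam V x) \<le> norm (dominating x)"
    by (intro AE_I2) (simp add: limit_density_def dominating_def)
qed

lemma integral_limit_density_pos: "0 < (\<integral>x. limit_density m p lam V x \<partial>Rm m)"
proof -
  have "emeasure (Rm m) (space (Rm m)) \<noteq> 0"
  proof -
    interpret L: product_sigma_finite "\<lambda>_. lborel :: real measure"
      by (intro product_sigma_finite.intro sigma_finite_lborel)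
    have "emeasure (Rm m) (PiE {..<m} (\<lambda>_. {0..1})) = 1"
      unfolding Rm_def by (subst L.emeasure_PiM) auto
    moreover have "emeasure (Rm m) (PiE {..<m} (\<lambda>_. {0..1})) \<le> emeasure (Rm m) (space (Rm m))"
      by (rule emeasure_space)
    ultimately show ?thesis
      by auto
  qed
  moreover have pos: "0 < limit_density m p lam V x" for x
    by (simp add: limit_density_def)
  then have nonneg: "AE x in Rm m. 0 \<le> limit_density m p lam V x"
    by (simp add: less_imp_le)
  have "(\<integral>x. limit_density m p lam V x \<partial>Rm m) \<noteq> 0"
  proof
    assume "(\<integral>x. limit_density m p lam V x \<partial>Rm m) = 0"
    then have "AE x in Rm m. False"
      using integral_nonneg_eq_0_iff_AE[OF integrable_limit_density nonneg] pos
      by (auto elim: AE_mp intro!: AE_I2 simp: less_le)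
    then show False
      using \<open>emeasure (Rm m) (space (Rm m)) \<noteq> 0\<close> by (simp add: AE_iff_measurable[OF _ refl])
  qed
  then show ?thesis
    using integral_nonneg_AE[OF nonneg] by simp
qed

lemma conv_in_distribution_hs_density:
  "conv_in_distribution sequentially m
     (\<lambda>n. density (Rm m) (\<lambda>x. ennreal (hs_density n x / (\<integral>y. hs_density n y \<partial>Rm m))))
     (limit_measure m p lam V)"
  unfolding limit_measure_def
proof (rule conv_in_distribution_normalized_density[OF _ _ _ _ integrable_dominating])
  show "\<forall>\<^sub>F n in sequentially. \<forall>x\<in>space (Rm m). hs_density n x \<le> dominating x"
    using hs_density_le_dominating eventually_sequentiallyI[of 1] by auto
qed (use integral_limit_density_pos hs_density_tendsto continuous_on_hs_density continuous_on_limit_density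
      in \<open>auto intro: borel_measurable_continuous_on_Rm simp: hs_density_def\<close>)

end

theorem proposition3p3:
  fixes m :: nat and p :: "nat \<Rightarrow> real" and k :: "nat \<Rightarrow> nat \<Rightarrow> real"
    and a :: "nat \<Rightarrow> real" and V :: "nat \<Rightarrow> nat \<Rightarrow> real" and lam :: "nat \<Rightarrow> real"
    and G :: "nat \<Rightarrow> nat \<Rightarrow> nat"
    and \<Omega> :: "nat \<Rightarrow> 'a measure" and \<sigma> :: "nat \<Rightarrow> 'a \<Rightarrow> nat \<Rightarrow> real"
    and Y :: "nat \<Rightarrow> 'a \<Rightarrow> nat \<Rightarrow> real"
  assumes m_pos: "m \<ge> 1"
    and p_pos: "\<forall>i<m. p i > 0" and p_sum: "(\<Sum>i<m. p i) = 1"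
    and k_pos: "\<forall>i<m. \<forall>j<m. k i j > 0" and k_sym: "\<forall>i<m. \<forall>j<m. k i j = k j i"
    and k_posdef: "\<forall>x. (\<exists>i<m. x i \<noteq> 0) \<longrightarrow> (\<Sum>i<m. \<Sum>j<m. x i * k i j * x j) > 0"
    and a_pos: "\<forall>i<m. a i > 0" and a_sum: "(\<Sum>i<m. a i) = 1"
    and a_eig: "\<exists>r. \<forall>j<m. (\<Sum>i<m. a i * (p i * k i j)) = r * a j"
    and V_orth: "\<forall>i<m. \<forall>j<m. (\<Sum>l<m. V i l * V j l) = (if i = j then 1 else 0)"
    and V_decomp: "\<forall>i<m. \<forall>j<m. beta_cr m p k a * (sqrt (p i) * k i j * sqrt (p j))
                     = (\<Sum>l<m. V i l * (if l = m - 1 then 1 else lam l) * V j l)"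
    and lam_bounds: "\<forall>l<m-1. 0 < lam l \<and> lam l < 1"
    and lam_mono: "\<forall>l l'. l \<le> l' \<and> l' < m - 1 \<longrightarrow> lam l \<le> lam l'"
    and G_range: "\<forall>n\<in>admissible_sizes m p. \<forall>v<n. G n v < m"
    and G_card: "\<forall>n\<in>admissible_sizes m p. \<forall>i<m.
                   real (card {v. v < n \<and> G n v = i}) = real n * p i"
    and prob: "\<forall>n\<in>admissible_sizes m p. prob_space (\<Omega> n)"
    and \<sigma>_law: "\<forall>n\<in>admissible_sizes m p.
                 distr (\<Omega> n) (count_space (config_set n)) (\<sigma> n)
                   = gibbs_measure n (G n) k (beta_cr m p k a)"
    and Y_law: "\<forall>n\<in>admissible_sizes m p.
                 distr (\<Omega> n) (Rm m) (Y n) = gaussian_diag m (Cn_diag m lam n)"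
    and indep: "\<forall>n\<in>admissible_sizes m p.
                 prob_space.indep_var (\<Omega> n) (count_space (config_set n)) (\<sigma> n) (Rm m) (Y n)"
  shows "conv_in_distribution (sequentially \<sqinter> principal (admissible_sizes m p)) m
           (\<lambda>n. distr (\<Omega> n) (Rm m)
                  (\<lambda>\<omega>. \<lambda>j\<in>{..<m}. U_vec m n p V (G n) (\<sigma> n \<omega>) j + Y n \<omega> j))
           (limit_measure m p lam V)"
proof -
  interpret critical_curie_weiss m p k a V lam G
    using m_pos p_pos p_sum k_sym V_orth V_decomp lam_bounds G_range G_card by unfold_locales
  have "\<forall>\<^sub>F n in sequentially \<sqinter> principal (admissible_sizes m p).
      distr (\<Omega> n) (Rm m) (\<lambda>\<omega>. \<lambda>j\<in>{..<m}. U_vec m n p V (G n) (\<sigma> n \<omega>) j + Y n \<omega> j)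
      = density (Rm m) (\<lambda>x. ennreal (hs_density n x / (\<integral>y. hs_density n y \<partial>Rm m)))"
    unfolding eventually_inf_principal using prob \<sigma>_law Y_law indep
    by (intro always_eventually allI impI law_eq_normalized_hs_density) auto
  with conv_in_distribution_hs_density show ?thesis
    by (rule conv_in_distribution_transform[OF _ inf_le1])
qed

end
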